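(* Under Assumptions A1–A3, $$\tau_{10}=\frac{\mathbb{E}(\phi_{1,10}-\phi_{0,10})}{\mathbb{E}(\psi_{S_1}-\psi_{S_0})},\qquad \tau_{00}=\frac{\mathbb{E}(\phi_{1,00}-\phi_{0,00})}{\mathbb{E}(1-\psi_{S_1})},\qquad \tau_{11}=\frac{\mathbb{E}(\phi_{1,11}-\phi_{0,11})}{\mathbb{E}(\psi_{S_0})}.$$
   Context: Setup: binary treatment $Z$, binary intermediate $S$, outcome $Y$, covariates $X$; potential values $S_z,Y_z$ with $S=ZS_1+(1-Z)S_0$, $Y=ZY_1+(1-Z)Y_0$; i.i.d. units. $U=(S_1,S_0)$ written $s_1s_0$; $\tau_u=\mathbb{E}(Y_1-Y_0\mid U=u)$. $\pi(X)=\mathbb{P}(Z=1\mid X)$, $e_u(X)=\mathbb{P}(U=u\mid X)$, $p_z(X)=\mathbb{P}(S=1\mid Z=z,X)$, $\mu_{zs}(X)=\mathbb{E}(Y\mid Z=z,S=s,X)$. A1: $Z\perp\!\!\!\perp(S_0,S_1,Y_0,Y_1)\mid X$; A2: $S_1\ge S_0$; A3: $\mathbb{E}(Y_1\mid U=11,X)=\mathbb{E}(Y_1\mid U=10,X)$, $\mathbb{E}(Y_0\mid U=00,X)=\mathbb{E}(Y_0\mid U=10,X)$. Under A1–A2, $e_{10}(X)=p_1(X)-p_0(X)$, $e_{00}(X)=1-p_1(X)$, $e_{11}(X)=p_0(X)$. For $f(Y,S,X)$, $\psi_{f(Y_z,S_z,X)}=[f(Y,S,X)-\mathbb{E}\{f\mid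 X,Z=z\}]\mathbf{1}(Z=z)/\mathbb{P}(Z=z\mid X)+\mathbb{E}\{f\mid X,Z=z\}$. Define $\phi_{1,10}=\frac{e_{10}(X)}{p_1(X)}\psi_{Y_1S_1}-\mu_{11}(X)\{\psi_{S_0}-\frac{p_0(X)}{p_1(X)}\psi_{S_1}\}$, $\phi_{0,10}=\frac{e_{10}(X)}{1-p_0(X)}\psi_{Y_0(1-S_0)}-\mu_{00}(X)\{\psi_{1-S_1}-\frac{1-p_1(X)}{1-p_0(X)}\psi_{1-S_0}\}$, $\phi_{1,00}=\psi_{Y_1(1-S_1)}$, $\phi_{0,00}=\frac{e_{00}(X)}{1-p_0(X)}\psi_{Y_0(1-S_0)}+\mu_{00}(X)\{\psi_{1-S_1}-\frac{1-p_1(X)}{1-p_0(X)}\psi_{1-S_0}\}$, $\phi_{1,11}=\frac{e_{11}(X)}{p_1(X)}\psi_{Y_1S_1}+\mu_{11}(X)\{\psi_{S_0}-\frac{p_0(X)}{p_1(X)}\psi_{S_1}\}$, $\phi_{0,11}=\psi_{Y_0S_0}$. *)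

theory Defs
  imports "HOL-Probability.Probability"
begin

text \<open>M is the probability space of a generic unit,
 X :: 'w => 'x the covariates (with measurable space MX), Z the binary
 treatment, S1 S0 the binary potential intermediates, Y1 Y0 the potential
 outcomes.  Binary quantities are bool-valued; of_bool gives the 0/1 value.\<close>

definition obsS :: "('w \<Rightarrow> bool) \<Rightarrow> ('w \<Rightarrow> bool) \<Rightarrow> ('w \<Rightarrow> bool) \<Rightarrow> 'w \<Rightarrow> bool" where
  "obsS Z S1 S0 = (\<lambda>w. if Z w then S1 w else S0 w)"

definition obsY :: "('w \<Rightarrow> bool) \<Rightarrow> ('w \<Rightarrow> real) \<Rightarrow> ('w \<Rightarrow> real) \<Rightarrow> 'w \<Rightarrow> real" where
  "obsY Z Y1 Y0 = (\<lambda>w. if Z w then Y1 w else Y0 w)"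

definition cE :: "'w measure \<Rightarrow> ('w \<Rightarrow> 'x) \<Rightarrow> 'x measure \<Rightarrow> ('w \<Rightarrow> real) \<Rightarrow> 'w \<Rightarrow> real" where
  "cE M X MX f = real_cond_exp M (vimage_algebra (space M) X MX) f"

definition cEev :: "'w measure \<Rightarrow> ('w \<Rightarrow> 'x) \<Rightarrow> 'x measure \<Rightarrow> ('w \<Rightarrow> bool) \<Rightarrow> ('w \<Rightarrow> real) \<Rightarrow> 'w \<Rightarrow> real" where
  "cEev M X MX A f = (\<lambda>w. cE M X MX (\<lambda>v. f v * of_bool (A v)) w / cE M X MX (\<lambda>v. of_bool (A v)) w)"

definition cond_indep :: "'w measure \<Rightarrow> ('w \<Rightarrow> 'x) \<Rightarrow> 'x measure \<Rightarrow> ('w \<Rightarrow> 'z) \<Rightarrow> ('w \<Rightarrow> 'v) \<Rightarrow> 'v measure \<Rightarrow> bool" where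
  "cond_indep M X MX Z W MW \<longleftrightarrow>
     (\<forall>A B. B \<in> sets MW \<longrightarrow>
        (AE w in M. cE M X MX (\<lambda>v. of_bool (Z v \<in> A \<and> W v \<in> B)) w
                   = cE M X MX (\<lambda>v. of_bool (Z v \<in> A)) w * cE M X MX (\<lambda>v. of_bool (W v \<in> B)) w))"

definition PZ :: "'w measure \<Rightarrow> ('w \<Rightarrow> 'x) \<Rightarrow> 'x measure \<Rightarrow> ('w \<Rightarrow> bool) \<Rightarrow> bool \<Rightarrow> 'w \<Rightarrow> real" where
  "PZ M X MX Z z = cE M X MX (\<lambda>v. of_bool (Z v = z))"

definition eU :: "'w measure \<Rightarrow> ('w \<Rightarrow> 'x) \<Rightarrow> 'x measure \<Rightarrow> ('w \<Rightarrow> bool) \<Rightarrow> ('w \<Rightarrow> bool) \<Rightarrow> bool \<times> bool \<Rightarrow> 'w \<Rightarrow> real" where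
  "eU M X MX S1 S0 u = cE M X MX (\<lambda>v. of_bool ((S1 v, S0 v) = u))"

definition pz :: "'w measure \<Rightarrow> ('w \<Rightarrow> 'x) \<Rightarrow> 'x measure \<Rightarrow> ('w \<Rightarrow> bool) \<Rightarrow> ('w \<Rightarrow> bool) \<Rightarrow> ('w \<Rightarrow> bool) \<Rightarrow> bool \<Rightarrow> 'w \<Rightarrow> real" where
  "pz M X MX Z S1 S0 z = cEev M X MX (\<lambda>v. Z v = z) (\<lambda>v. of_bool (obsS Z S1 S0 v))"

definition muzs :: "'w measure \<Rightarrow> ('w \<Rightarrow> 'x) \<Rightarrow> 'x measure \<Rightarrow> ('w \<Rightarrow> bool) \<Rightarrow> ('w \<Rightarrow> bool) \<Rightarrow> ('w \<Rightarrow> bool)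
     \<Rightarrow> ('w \<Rightarrow> real) \<Rightarrow> ('w \<Rightarrow> real) \<Rightarrow> bool \<Rightarrow> bool \<Rightarrow> 'w \<Rightarrow> real" where
  "muzs M X MX Z S1 S0 Y1 Y0 z s =
     cEev M X MX (\<lambda>v. Z v = z \<and> obsS Z S1 S0 v = s) (obsY Z Y1 Y0)"

text \<open>psi_{f(Y_z,S_z,X)}, where f is given as the observed-data function w |-> f(Y w, S w, X w):
 [f - E(f | X, Z=z)] 1(Z=z) / P(Z=z | X) + E(f | X, Z=z).\<close>
definition psi :: "'w measure \<Rightarrow> ('w \<Rightarrow> 'x) \<Rightarrow> 'x measure \<Rightarrow> ('w \<Rightarrow> bool) \<Rightarrow> bool \<Rightarrow> ('w \<Rightarrow> real) \<Rightarrow> 'w \<Rightarrow> real" where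
  "psi M X MX Z z f = (\<lambda>w. (f w - cEev M X MX (\<lambda>v. Z v = z) f w) * of_bool (Z w = z) / PZ M X MX Z z w
                          + cEev M X MX (\<lambda>v. Z v = z) f w)"

definition fYS where "fYS Z S1 S0 Y1 Y0 = (\<lambda>w. obsY Z Y1 Y0 w * of_bool (obsS Z S1 S0 w))"
definition fY1mS where "fY1mS Z S1 S0 Y1 Y0 = (\<lambda>w. obsY Z Y1 Y0 w * (1 - of_bool (obsS Z S1 S0 w)))"
definition fS :: "('w \<Rightarrow> bool) \<Rightarrow> ('w \<Rightarrow> bool) \<Rightarrow> ('w \<Rightarrow> bool) \<Rightarrow> 'w \<Rightarrow> real"
  where "fS Z S1 S0 = (\<lambda>w. of_bool (obsS Z S1 S0 w))"
definition f1mS :: "('w \<Rightarrow> bool) \<Rightarrow> ('w \<Rightarrow> bool) \<Rightarrow> ('w \<Rightarrow> bool) \<Rightarrow> 'w \<Rightarrow> real"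
  where "f1mS Z S1 S0 = (\<lambda>w. 1 - of_bool (obsS Z S1 S0 w))"

definition phi_1_10 where "phi_1_10 M X MX Z S1 S0 Y1 Y0 = (\<lambda>w.
    eU M X MX S1 S0 (True, False) w / pz M X MX Z S1 S0 True w * psi M X MX Z True (fYS Z S1 S0 Y1 Y0) w
  - muzs M X MX Z S1 S0 Y1 Y0 True True w *
      (psi M X MX Z False (fS Z S1 S0) w
        - pz M X MX Z S1 S0 False w / pz M X MX Z S1 S0 True w * psi M X MX Z True (fS Z S1 S0) w))"

definition phi_0_10 where "phi_0_10 M X MX Z S1 S0 Y1 Y0 = (\<lambda>w.
    eU M X MX S1 S0 (True, False) w / (1 - pz M X MX Z S1 S0 False w) * psi M X MX Z False (fY1mS Z S1 S0 Y1 Y0) w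
  - muzs M X MX Z S1 S0 Y1 Y0 False False w *
      (psi M X MX Z True (f1mS Z S1 S0) w
        - (1 - pz M X MX Z S1 S0 True w) / (1 - pz M X MX Z S1 S0 False w) * psi M X MX Z False (f1mS Z S1 S0) w))"

definition phi_1_00 where "phi_1_00 M X MX Z S1 S0 Y1 Y0 = psi M X MX Z True (fY1mS Z S1 S0 Y1 Y0)"

definition phi_0_00 where "phi_0_00 M X MX Z S1 S0 Y1 Y0 = (\<lambda>w.
    eU M X MX S1 S0 (False, False) w / (1 - pz M X MX Z S1 S0 False w) * psi M X MX Z False (fY1mS Z S1 S0 Y1 Y0) w
  + muzs M X MX Z S1 S0 Y1 Y0 False False w *
      (psi M X MX Z True (f1mS Z S1 S0) w
        - (1 - pz M X MX Z S1 S0 True w) / (1 - pz M X MX Z S1 S0 False w) * psi M X MX Z False (f1mS Z S1 S0) w))"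

definition phi_1_11 where "phi_1_11 M X MX Z S1 S0 Y1 Y0 = (\<lambda>w.
    eU M X MX S1 S0 (True, True) w / pz M X MX Z S1 S0 True w * psi M X MX Z True (fYS Z S1 S0 Y1 Y0) w
  + muzs M X MX Z S1 S0 Y1 Y0 True True w *
      (psi M X MX Z False (fS Z S1 S0) w
        - pz M X MX Z S1 S0 False w / pz M X MX Z S1 S0 True w * psi M X MX Z True (fS Z S1 S0) w))"

definition phi_0_11 where "phi_0_11 M X MX Z S1 S0 Y1 Y0 = psi M X MX Z False (fYS Z S1 S0 Y1 Y0)"

definition tau :: "'w measure \<Rightarrow> ('w \<Rightarrow> bool) \<Rightarrow> ('w \<Rightarrow> bool) \<Rightarrow> ('w \<Rightarrow> real) \<Rightarrow> ('w \<Rightarrow> real) \<Rightarrow> bool \<times> bool \<Rightarrow> real" where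
  "tau M S1 S0 Y1 Y0 u =
     (\<integral>w. (Y1 w - Y0 w) * of_bool ((S1 w, S0 w) = u) \<partial>M) / measure M {w \<in> space M. (S1 w, S0 w) = u}"

end

theory Submission
  imports Defs
begin

text \<open>By A1, inside an expectation against any \<open>\<sigma>(X)\<close>-measurable weight, the pseudo-outcome
  \<open>\<psi>\<close> of \<open>f(Y\<^sub>z, S\<^sub>z)\<close> may be replaced by \<open>E(f(Y\<^sub>z, S\<^sub>z) | X)\<close>: inverse propensity weighting
  turns the mean of \<open>f(Y, S) 1(Z = z) / P(Z = z | X)\<close> into that of \<open>E(f(Y\<^sub>z, S\<^sub>z) | X)\<close>.
  Monotonicity A2 gives \<open>e\<^sub>1\<^sub>1 = E(S\<^sub>0 | X)\<close>, \<open>e\<^sub>1\<^sub>1 + e\<^sub>1\<^sub>0 = p\<^sub>1\<close> and \<open>e\<^sub>0\<^sub>0 + e\<^sub>1\<^sub>0 = 1 - p\<^sub>0\<close>.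
  Principal ignorability A3 says that the two strata pooled in \<open>E(Y\<^sub>1 S\<^sub>1 | X)\<close>
  (resp. \<open>E(Y\<^sub>0 (1 - S\<^sub>0) | X)\<close>) have the same conditional mean, so stratum \<open>u\<close> receives the
  share \<open>e\<^sub>u / p\<^sub>1\<close> (resp. \<open>e\<^sub>u / (1 - p\<^sub>0)\<close>) of it. The two \<open>\<mu>\<close>-weighted correction terms of each
  \<open>\<phi>\<close> have equal means, hence \<open>E \<phi>\<^sub>z\<^sub>u = E(Y\<^sub>z 1(U = u))\<close>, and the denominators are \<open>P(U = u)\<close>.\<close>

lemma integral_mult_comp_eq_of_preimage_integrals:
  fixes d1 d2 :: "'a \<Rightarrow> real" and V :: "'a \<Rightarrow> 'b" and g :: "'b \<Rightarrow> real"
  assumes d1: "integrable M d1" "AE x in M. 0 \<le> d1 x"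
    and d2: "integrable M d2" "AE x in M. 0 \<le> d2 x"
    and V[measurable]: "V \<in> M \<rightarrow>\<^sub>M N"
    and preimage: "\<And>B. B \<in> sets N \<Longrightarrow>
      (\<integral>x. d1 x * indicator (V -` B \<inter> space M) x \<partial>M) = (\<integral>x. d2 x * indicator (V -` B \<inter> space M) x \<partial>M)"
    and g[measurable]: "g \<in> borel_measurable N"
  shows "(\<integral>x. d1 x * g (V x) \<partial>M) = (\<integral>x. d2 x * g (V x) \<partial>M)"
proof -
  have emeasure_preimage: "emeasure (distr (density M d) N V) B
      = ennreal (\<integral>x. d x * indicator (V -` B \<inter> space M) x \<partial>M)"
    if d: "integrable M d" "AE x in M. 0 \<le> d x" and B: "B \<in> sets N" for d B
  proof -
    have [measurable]: "d \<in> borel_measurable M" "V -` B \<inter> space M \<in> sets M"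
      using d B by auto
    have "emeasure (distr (density M d) N V) B
        = (\<integral>\<^sup>+x. ennreal (d x) * indicator (V -` B \<inter> space M) x \<partial>M)"
      using B by (simp add: emeasure_distr emeasure_density)
    also have "\<dots> = (\<integral>\<^sup>+x. ennreal (d x * indicator (V -` B \<inter> space M) x) \<partial>M)"
      by (rule nn_integral_cong) (auto simp: indicator_def)
    also have "\<dots> = ennreal (\<integral>x. d x * indicator (V -` B \<inter> space M) x \<partial>M)"
      using integrable_mult_indicator[OF _ d(1), of "V -` B \<inter> space M"] d(2)
      by (intro nn_integral_eq_integral) (auto simp: mult.commute indicator_def)
    finally show ?thesis .
  qed
  have integral_image: "(\<integral>y. g y \<partial>distr (density M d) N V) = (\<integral>x. d x * g (V x) \<partial>M)"
    if d: "integrable M d" "AE x in M. 0 \<le> d x" for d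
  proof -
    have [measurable]: "d \<in> borel_measurable M" using d by auto
    have "(\<integral>y. g y \<partial>distr (density M d) N V) = (\<integral>x. g (V x) \<partial>density M d)"
      by (rule integral_distr) auto
    also have "\<dots> = (\<integral>x. d x *\<^sub>R g (V x) \<partial>M)"
      using d by (intro integral_density) auto
    finally show ?thesis by simp
  qed
  have "distr (density M d1) N V = distr (density M d2) N V"
    by (rule measure_eqI) (auto simp: emeasure_preimage d1 d2 preimage)
  then show ?thesis
    using integral_image[OF d1] integral_image[OF d2] by simp
qed

lemma mixture_share:
  fixes ea eb na nb :: real
  assumes "0 \<le> ea" "0 \<le> eb" "0 < ea \<and> 0 < eb \<longrightarrow> na / ea = nb / eb"
    and "ea = 0 \<longrightarrow> na = 0" "eb = 0 \<longrightarrow> nb = 0"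
  shows "eb / (ea + eb) * (na + nb) = nb"
proof (cases "ea = 0 \<or> eb = 0")
  case True
  then show ?thesis using assms by auto
next
  case False
  then have "0 < ea" "0 < eb" "na = nb * ea / eb"
    using assms by (auto simp: field_simps)
  then show ?thesis by (simp add: field_simps)
qed

context sigma_finite_subalgebra
begin

lemma integrable_mult_of_integrable_mult_cond_exp:
  fixes c g :: "'a \<Rightarrow> real"
  assumes c[measurable]: "c \<in> borel_measurable F" and c_nonneg: "\<And>x. 0 \<le> c x"
    and g: "integrable M g" and g_nonneg: "\<And>x. 0 \<le> g x"
    and cg: "integrable M (\<lambda>x. c x * real_cond_exp M F g x)"
  shows "integrable M (\<lambda>x. c x * g x)"
proof -
  have [measurable]: "c \<in> borel_measurable M" "g \<in> borel_measurable M"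
    using measurable_from_subalg[OF subalg c] g by auto
  let ?G = "nn_cond_exp M F (\<lambda>x. ennreal (g x))"
  have "(\<integral>\<^sup>+x. ?G x \<partial>M) = (\<integral>\<^sup>+x. ennreal (g x) \<partial>M)"
    using nn_cond_exp_intg[of "\<lambda>_. 1" "\<lambda>x. ennreal (g x)"] by simp
  then have "AE x in M. ?G x \<noteq> \<infinity>"
    using g g_nonneg by (intro nn_integral_PInf_AE) (auto simp: integrable_iff_bounded)
  moreover have "AE x in M. nn_cond_exp M F (\<lambda>x. ennreal (- g x)) x = 0"
    using nn_cond_exp_F_meas[of "\<lambda>_. 0"] g_nonneg by (simp add: ennreal_neg)
  ultimately have G: "AE x in M. ?G x = ennreal (real_cond_exp M F g x)"
    unfolding real_cond_exp_def by eventually_elim (simp add: ennreal_enn2real_if)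
  have "(\<integral>\<^sup>+x. ennreal (c x * g x) \<partial>M) = (\<integral>\<^sup>+x. ennreal (c x) * ennreal (g x) \<partial>M)"
    by (simp add: ennreal_mult' c_nonneg)
  also have "\<dots> = (\<integral>\<^sup>+x. ennreal (c x) * ?G x \<partial>M)"
    by (rule nn_cond_exp_intg[symmetric]) auto
  also have "\<dots> = (\<integral>\<^sup>+x. ennreal (c x * real_cond_exp M F g x) \<partial>M)"
    using G by (intro nn_integral_cong_AE) (auto simp: ennreal_mult' c_nonneg)
  also have "\<dots> < \<infinity>"
    using cg unfolding integrable_iff_bounded
    by (auto intro: order.strict_trans1[OF nn_integral_mono, rotated] ennreal_leI)
  finally show ?thesis
    using c_nonneg g_nonneg by (intro integrableI_nonneg) auto
qed

lemma abs_real_cond_exp_le: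
  assumes G: "integrable M G"
  shows "AE x in M. \<bar>real_cond_exp M F G x\<bar> \<le> real_cond_exp M F (\<lambda>v. \<bar>G v\<bar>) x"
proof -
  have "AE x in M. real_cond_exp M F G x \<le> real_cond_exp M F (\<lambda>v. \<bar>G v\<bar>) x"
    by (rule real_cond_exp_mono) (auto simp: G)
  moreover have "AE x in M. real_cond_exp M F (\<lambda>v. -1 * G v) x \<le> real_cond_exp M F (\<lambda>v. \<bar>G v\<bar>) x"
    by (rule real_cond_exp_mono) (auto simp: G)
  moreover have "AE x in M. real_cond_exp M F (\<lambda>v. -1 * G v) x = -1 * real_cond_exp M F G x"
    by (rule real_cond_exp_cmult[OF G])
  ultimately show ?thesis by eventually_elim auto
qed

end

locale covariate_conditioning =
  fixes M :: "'w measure" and X :: "'w \<Rightarrow> 'x" and MX :: "'x measure"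
  assumes prob_space_M: "prob_space M" and X_measurable: "X \<in> M \<rightarrow>\<^sub>M MX"
begin

abbreviation sigma_X :: "'w measure" where "sigma_X \<equiv> vimage_algebra (space M) X MX"

abbreviation E_X :: "('w \<Rightarrow> real) \<Rightarrow> 'w \<Rightarrow> real" where "E_X \<equiv> cE M X MX"

lemma sigma_finite_subalgebra_sigma_X: "sigma_finite_subalgebra M sigma_X"
proof -
  interpret prob_space M by (rule prob_space_M)
  have "X \<in> space M \<rightarrow> space MX"
    using measurable_space[OF X_measurable] by (intro Pi_I)
  then have "sets sigma_X = {X -` A \<inter> space M | A. A \<in> sets MX}"
    by (rule sets_vimage_algebra2)
  then have "subalgebra M sigma_X"
    using measurable_sets[OF X_measurable] by (auto simp: subalgebra_def)
  then show ?thesis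
    by (intro finite_measure_subalgebra_is_sigma_finite finite_measure_subalgebra.intro
        finite_measure_subalgebra_axioms.intro finite_measure_axioms)
qed

end

sublocale covariate_conditioning \<subseteq> sigma_finite_subalgebra M sigma_X
  by (rule sigma_finite_subalgebra_sigma_X)

sublocale covariate_conditioning \<subseteq> prob_space M
  by (rule prob_space_M)

context covariate_conditioning
begin

lemma cE_measurable [measurable]:
  "E_X f \<in> borel_measurable sigma_X" "E_X f \<in> borel_measurable M"
  unfolding cE_def by auto

lemma cE_intg:
  assumes "integrable M (\<lambda>x. f x * g x)" "f \<in> borel_measurable sigma_X" "g \<in> borel_measurable M"
  shows "integrable M (\<lambda>x. f x * E_X g x)" "(\<integral>x. f x * E_X g x \<partial>M) = (\<integral>x. f x * g x \<partial>M)"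
  using real_cond_exp_intg[OF assms] unfolding cE_def by auto

lemma cE_int:
  assumes "integrable M f"
  shows "integrable M (E_X f)" "(\<integral>x. E_X f x \<partial>M) = (\<integral>x. f x \<partial>M)"
  using real_cond_exp_int[OF assms] unfolding cE_def by auto

lemma cE_cong:
  "f \<in> borel_measurable M \<Longrightarrow> g \<in> borel_measurable M \<Longrightarrow> (\<And>x. x \<in> space M \<Longrightarrow> f x = g x)
    \<Longrightarrow> AE x in M. E_X f x = E_X g x"
  unfolding cE_def by (rule real_cond_exp_cong) auto

lemma cE_cong_AE:
  "AE x in M. f x = g x \<Longrightarrow> f \<in> borel_measurable M \<Longrightarrow> g \<in> borel_measurable M
    \<Longrightarrow> AE x in M. E_X f x = E_X g x"
  unfolding cE_def by (rule real_cond_exp_cong)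

lemma cE_add:
  "integrable M f \<Longrightarrow> integrable M g \<Longrightarrow> AE x in M. E_X (\<lambda>v. f v + g v) x = E_X f x + E_X g x"
  unfolding cE_def by (rule real_cond_exp_add)

lemma cE_diff:
  "integrable M f \<Longrightarrow> integrable M g \<Longrightarrow> AE x in M. E_X (\<lambda>v. f v - g v) x = E_X f x - E_X g x"
  unfolding cE_def by (rule real_cond_exp_diff)

lemma cE_const: "AE x in M. E_X (\<lambda>_. c) x = c"
  unfolding cE_def by (rule real_cond_exp_F_meas) auto

lemma cE_one_minus:
  assumes "integrable M f"
  shows "AE x in M. E_X (\<lambda>v. 1 - f v) x = 1 - E_X f x"
proof -
  have "AE x in M. E_X (\<lambda>v. 1 - f v) x = E_X (\<lambda>_. 1) x - E_X f x"
    using assms by (intro cE_diff) auto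
  with cE_const[of 1] show ?thesis by eventually_elim auto
qed

lemma cE_unit_interval:
  assumes [measurable]: "f \<in> borel_measurable M" and f: "\<And>x. 0 \<le> f x \<and> f x \<le> 1"
  shows "AE x in M. 0 \<le> E_X f x \<and> E_X f x \<le> 1"
proof -
  have "integrable M f"
    using f by (intro integrable_const_bound[where B=1]) auto
  then have "AE x in M. real_cond_exp M sigma_X f x \<le> 1"
    using f by (intro real_cond_exp_le_c) auto
  moreover have "AE x in M. 0 \<le> real_cond_exp M sigma_X f x"
    using f by (intro real_cond_exp_pos) auto
  ultimately show ?thesis unfolding cE_def by auto
qed

lemma abs_cE_le:
  "integrable M G \<Longrightarrow> AE x in M. \<bar>E_X G x\<bar> \<le> E_X (\<lambda>v. \<bar>G v\<bar>) x"
  unfolding cE_def by (rule abs_real_cond_exp_le)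

lemma cE_mult_event_eq_0:
  assumes h: "integrable M h" and A[measurable]: "Measurable.pred M A"
  shows "AE x in M. E_X (\<lambda>v. of_bool (A v)) x = 0 \<longrightarrow> E_X (\<lambda>v. h v * of_bool (A v)) x = 0"
proof -
  have [measurable]: "h \<in> borel_measurable M" using h by auto
  define B where "B = {x \<in> space M. E_X (\<lambda>v. of_bool (A v)) x = 0}"
  have "B = E_X (\<lambda>v. of_bool (A v)) -` {0} \<inter> space sigma_X"
    unfolding B_def by auto
  then have B_sigma_X[measurable]: "B \<in> sets sigma_X"
    using measurable_sets[OF cE_measurable(1)] by simp
  then have [measurable]: "B \<in> sets M"
    using subalg by (auto simp: subalgebra_def)
  have AB: "integrable M (\<lambda>x. indicator B x * of_bool (A x) :: real)"
    by (intro integrable_const_bound[where B=1]) (auto simp: indicator_def)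
  have "(\<integral>x. indicator B x * of_bool (A x) \<partial>M) = (\<integral>x. indicator B x * E_X (\<lambda>v. of_bool (A v)) x \<partial>M)"
    using cE_intg(2)[OF AB] by simp
  also have "\<dots> = 0"
    by (rule integral_eq_zero_AE) (auto simp: B_def indicator_def)
  finally have "AE x in M. indicator B x * of_bool (A x) = (0::real)"
    using integral_nonneg_eq_0_iff_AE[OF AB] by auto
  then have "AE x in M. indicator B x * (h x * of_bool (A x)) = (0::real)"
    by eventually_elim auto
  then have "AE x in M. E_X (\<lambda>x. indicator B x * (h x * of_bool (A x))) x = E_X (\<lambda>_. 0) x"
    by (intro cE_cong_AE) auto
  moreover have "AE x in M. E_X (\<lambda>x. indicator B x * (h x * of_bool (A x))) x
      = indicator B x * E_X (\<lambda>v. h v * of_bool (A v)) x"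
    unfolding cE_def
    by (intro real_cond_exp_mult Bochner_Integration.integrable_bound[OF h]) (auto simp: indicator_def)
  ultimately have "AE x in M. indicator B x * E_X (\<lambda>v. h v * of_bool (A v)) x = E_X (\<lambda>_. 0) x"
    by eventually_elim simp
  with cE_const[of 0] AE_space show ?thesis
    by eventually_elim (auto simp: B_def indicator_def)
qed

lemma measure_eq_integral_of_bool:
  assumes [measurable]: "Measurable.pred M P"
  shows "measure M {x \<in> space M. P x} = (\<integral>x. of_bool (P x) \<partial>M)"
proof -
  have "(\<integral>x. of_bool (P x) \<partial>M) = (\<integral>x. indicator {x \<in> space M. P x} x \<partial>M)"
    by (rule Bochner_Integration.integral_cong) (auto simp: indicator_def)
  also have "\<dots> = measure M {x \<in> space M. P x}"
    by simp
  finally show ?thesis ..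
qed

lemma cE_nonneg:
  "f \<in> borel_measurable M \<Longrightarrow> (\<And>x. 0 \<le> f x) \<Longrightarrow> AE x in M. 0 \<le> E_X f x"
  unfolding cE_def by (rule real_cond_exp_pos) auto

lemma PZ_measurable [measurable]:
  "PZ M X MX Z z \<in> borel_measurable sigma_X" "PZ M X MX Z z \<in> borel_measurable M"
  unfolding PZ_def by auto

lemma PZ_unit_interval:
  "Z \<in> M \<rightarrow>\<^sub>M count_space UNIV \<Longrightarrow> AE x in M. 0 \<le> PZ M X MX Z z x \<and> PZ M X MX Z z x \<le> 1"
  unfolding PZ_def by (rule cE_unit_interval) auto

lemma cond_indep_integral_factor:
  fixes Z :: "'w \<Rightarrow> bool" and V :: "'w \<Rightarrow> 'v" and g :: "'v \<Rightarrow> real"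
  assumes ci: "cond_indep M X MX Z V MV" and V[measurable]: "V \<in> M \<rightarrow>\<^sub>M MV"
    and Z[measurable]: "Z \<in> M \<rightarrow>\<^sub>M count_space UNIV"
    and g[measurable]: "g \<in> borel_measurable MV" and A: "A \<in> sets sigma_X"
  shows "(\<integral>x. (indicator A x * of_bool (Z x = z)) * g (V x) \<partial>M)
       = (\<integral>x. (indicator A x * PZ M X MX Z z x) * g (V x) \<partial>M)"
proof -
  let ?P = "PZ M X MX Z z"
  have [measurable]: "A \<in> sets M" using A subalg by (auto simp: subalgebra_def)
  have A_P[measurable]: "(\<lambda>x. indicator A x * ?P x) \<in> borel_measurable sigma_X"
    using A by measurable
  have P: "AE x in M. 0 \<le> ?P x \<and> ?P x \<le> 1" by (rule PZ_unit_interval[OF Z])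
  have d_P: "integrable M (\<lambda>x. indicator A x * ?P x)"
    using P by (intro integrable_const_bound[where B=1]) (auto simp: abs_mult indicator_def)
  have d_Z: "integrable M (\<lambda>x. indicator A x * of_bool (Z x = z) :: real)"
    by (intro integrable_const_bound[where B=1]) (auto simp: indicator_def)
  have "AE x in M. 0 \<le> indicator A x * ?P x"
    using P by eventually_elim (simp add: indicator_def)
  moreover have "AE x in M. 0 \<le> (indicator A x * of_bool (Z x = z) :: real)"
    by (simp add: indicator_def)
  \<comment> \<open>A1 only speaks about indicators of \<open>V\<close>; the two image measures then agree.\<close>
  ultimately show ?thesis
  proof (intro integral_mult_comp_eq_of_preimage_integrals[OF d_Z _ d_P _ V _ g])
    fix B assume [measurable]: "B \<in> sets MV"
    have "AE x in M. E_X (\<lambda>v. of_bool (Z v \<in> {z} \<and> V v \<in> B)) x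
        = E_X (\<lambda>v. of_bool (Z v \<in> {z})) x * E_X (\<lambda>v. of_bool (V v \<in> B)) x"
      using ci \<open>B \<in> sets MV\<close> unfolding cond_indep_def by blast
    then have factor: "AE x in M. E_X (\<lambda>v. of_bool (Z v \<in> {z} \<and> V v \<in> B)) x
        = ?P x * E_X (\<lambda>v. of_bool (V v \<in> B)) x"
      by (simp add: PZ_def)
    have "(\<integral>x. (indicator A x * of_bool (Z x = z)) * indicator (V -` B \<inter> space M) x \<partial>M)
        = (\<integral>x. (indicator A x * of_bool (Z x \<in> {z} \<and> V x \<in> B) :: real) \<partial>M)"
      by (rule Bochner_Integration.integral_cong) (auto simp: indicator_def)
    also have "\<dots> = (\<integral>x. indicator A x * E_X (\<lambda>v. of_bool (Z v \<in> {z} \<and> V v \<in> B)) x \<partial>M)"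
      using A by (intro cE_intg(2)[symmetric] integrable_const_bound[where B=1]) (auto simp: indicator_def)
    also have "\<dots> = (\<integral>x. (indicator A x * ?P x) * E_X (\<lambda>v. of_bool (V v \<in> B)) x \<partial>M)"
      using factor by (intro integral_cong_AE) auto
    also have "\<dots> = (\<integral>x. (indicator A x * ?P x) * of_bool (V x \<in> B) \<partial>M)"
      using P by (intro cE_intg(2)[OF _ A_P] integrable_const_bound[where B=1]) (auto simp: indicator_def)
    also have "\<dots> = (\<integral>x. (indicator A x * ?P x) * indicator (V -` B \<inter> space M) x \<partial>M)"
      by (rule Bochner_Integration.integral_cong) (auto simp: indicator_def)
    finally show "(\<integral>x. (indicator A x * of_bool (Z x = z)) * indicator (V -` B \<inter> space M) x \<partial>M)
        = (\<integral>x. (indicator A x * ?P x) * indicator (V -` B \<inter> space M) x \<partial>M)" .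
  qed
qed

lemma cond_indep_cE_factor:
  fixes Z :: "'w \<Rightarrow> bool" and V :: "'w \<Rightarrow> 'v" and g :: "'v \<Rightarrow> real"
  assumes ci: "cond_indep M X MX Z V MV" and V[measurable]: "V \<in> M \<rightarrow>\<^sub>M MV"
    and Z[measurable]: "Z \<in> M \<rightarrow>\<^sub>M count_space UNIV"
    and g[measurable]: "g \<in> borel_measurable MV" and gV: "integrable M (\<lambda>x. g (V x))"
  shows "AE x in M. E_X (\<lambda>v. g (V v) * of_bool (Z v = z)) x = PZ M X MX Z z x * E_X (\<lambda>v. g (V v)) x"
proof -
  let ?P = "PZ M X MX Z z" and ?G = "\<lambda>x. g (V x)"
  have P: "AE x in M. 0 \<le> ?P x \<and> ?P x \<le> 1" by (rule PZ_unit_interval[OF Z])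
  have weight_bound: "integrable M (\<lambda>x. a x * ?G x)"
    if [measurable]: "a \<in> borel_measurable M" and "AE x in M. \<bar>a x\<bar> \<le> 1" for a
    using that(2) by (intro Bochner_Integration.integrable_bound[OF gV])
      (auto simp: abs_mult intro!: mult_left_le_one_le elim!: eventually_mono)
  have "AE x in M. real_cond_exp M sigma_X (\<lambda>x. ?G x * of_bool (Z x = z)) x = ?P x * E_X ?G x"
  proof (rule real_cond_exp_charact)
    fix A assume A: "A \<in> sets sigma_X"
    then have [measurable]: "A \<in> sets M" using subalg by (auto simp: subalgebra_def)
    have [measurable]: "(\<lambda>x. indicator A x * ?P x) \<in> borel_measurable sigma_X"
      using A by measurable
    have AP_bound: "AE x in M. \<bar>indicator A x * ?P x\<bar> \<le> 1"
      using P by eventually_elim (auto simp: indicator_def)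
    have "(\<integral>x\<in>A. ?P x * E_X ?G x \<partial>M) = (\<integral>x. (indicator A x * ?P x) * E_X ?G x \<partial>M)"
      by (simp add: set_lebesgue_integral_def mult.assoc)
    also have "\<dots> = (\<integral>x. (indicator A x * ?P x) * ?G x \<partial>M)"
      using AP_bound by (intro cE_intg(2) weight_bound) auto
    also have "\<dots> = (\<integral>x. (indicator A x * of_bool (Z x = z)) * ?G x \<partial>M)"
      by (rule cond_indep_integral_factor[OF ci V Z g A, symmetric])
    also have "\<dots> = (\<integral>x\<in>A. ?G x * of_bool (Z x = z) \<partial>M)"
      by (simp add: set_lebesgue_integral_def mult_ac)
    finally show "(\<integral>x\<in>A. ?G x * of_bool (Z x = z) \<partial>M) = (\<integral>x\<in>A. ?P x * E_X ?G x \<partial>M)" ..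
  next
    show "integrable M (\<lambda>x. ?G x * of_bool (Z x = z))"
      using weight_bound[of "\<lambda>x. of_bool (Z x = z)"] by (simp add: mult.commute)
    have "AE x in M. \<bar>?P x * E_X ?G x\<bar> \<le> \<bar>E_X ?G x\<bar>"
      using P by eventually_elim (auto simp: abs_mult intro!: mult_left_le_one_le)
    then show "integrable M (\<lambda>x. ?P x * E_X ?G x)"
      by (intro Bochner_Integration.integrable_bound[OF cE_int(1)[OF gV]]) auto
  qed auto
  then show ?thesis unfolding cE_def .
qed

lemma cEev_eq_cE_of_factor:
  fixes Z :: "'w \<Rightarrow> bool" and f G :: "'w \<Rightarrow> real"
  assumes [measurable]: "Z \<in> M \<rightarrow>\<^sub>M count_space UNIV" "f \<in> borel_measurable M" "G \<in> borel_measurable M"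
    and P_pos: "AE x in M. 0 < PZ M X MX Z z x"
    and fG: "\<forall>x\<in>space M. f x * of_bool (Z x = z) = G x * of_bool (Z x = z)"
    and factor: "AE x in M. E_X (\<lambda>v. G v * of_bool (Z v = z)) x = PZ M X MX Z z x * E_X G x"
  shows "AE x in M. cEev M X MX (\<lambda>v. Z v = z) f x = E_X G x"
proof -
  have "AE x in M. E_X (\<lambda>v. f v * of_bool (Z v = z)) x = E_X (\<lambda>v. G v * of_bool (Z v = z)) x"
    using fG by (intro cE_cong) auto
  with factor P_pos show ?thesis
    by eventually_elim (auto simp: cEev_def PZ_def)
qed

lemma integral_inverse_propensity_weighting:
  fixes Z :: "'w \<Rightarrow> bool" and b G :: "'w \<Rightarrow> real"
  assumes Z[measurable]: "Z \<in> M \<rightarrow>\<^sub>M count_space UNIV" and P_pos: "AE x in M. 0 < PZ M X MX Z z x"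
    and b[measurable]: "b \<in> borel_measurable sigma_X" and G: "integrable M G"
    and factor: "AE x in M. E_X (\<lambda>v. G v * of_bool (Z v = z)) x = PZ M X MX Z z x * E_X G x"
    and factor_abs: "AE x in M. E_X (\<lambda>v. \<bar>G v\<bar> * of_bool (Z v = z)) x = PZ M X MX Z z x * E_X (\<lambda>v. \<bar>G v\<bar>) x"
    and bound: "integrable M (\<lambda>x. \<bar>b x\<bar> * E_X (\<lambda>v. \<bar>G v\<bar>) x)"
  shows "integrable M (\<lambda>x. b x / PZ M X MX Z z x * (G x * of_bool (Z x = z)))"
    and "(\<integral>x. b x / PZ M X MX Z z x * (G x * of_bool (Z x = z)) \<partial>M) = (\<integral>x. b x * E_X G x \<partial>M)"
proof -
  let ?P = "PZ M X MX Z z"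
  have [measurable]: "G \<in> borel_measurable M" "b \<in> borel_measurable M"
    using G measurable_from_subalg[OF subalg b] by auto
  have weight[measurable]: "(\<lambda>x. \<bar>b x / ?P x\<bar>) \<in> borel_measurable sigma_X" by measurable
  have "integrable M (\<lambda>x. \<bar>b x / ?P x\<bar> * (\<bar>G x\<bar> * of_bool (Z x = z)))"
  proof (rule integrable_mult_of_integrable_mult_cond_exp[OF weight])
    show "integrable M (\<lambda>x. \<bar>G x\<bar> * of_bool (Z x = z))"
      by (rule Bochner_Integration.integrable_bound[OF G]) auto
    have "AE x in M. \<bar>b x\<bar> * E_X (\<lambda>v. \<bar>G v\<bar>) x
        = \<bar>b x / ?P x\<bar> * real_cond_exp M sigma_X (\<lambda>v. \<bar>G v\<bar> * of_bool (Z v = z)) x"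
      using factor_abs P_pos by eventually_elim (auto simp: cE_def abs_divide)
    then show "integrable M (\<lambda>x. \<bar>b x / ?P x\<bar> * real_cond_exp M sigma_X (\<lambda>v. \<bar>G v\<bar> * of_bool (Z v = z)) x)"
      by (intro integrable_cong_AE_imp[OF bound]) (auto simp: cE_def)
  qed auto
  then show int: "integrable M (\<lambda>x. b x / ?P x * (G x * of_bool (Z x = z)))"
    by (rule Bochner_Integration.integrable_bound) (auto simp: abs_mult)
  have "(\<integral>x. b x / ?P x * (G x * of_bool (Z x = z)) \<partial>M)
      = (\<integral>x. b x / ?P x * E_X (\<lambda>v. G v * of_bool (Z v = z)) x \<partial>M)"
    by (rule cE_intg(2)[OF int, symmetric]) auto
  also have "\<dots> = (\<integral>x. b x * E_X G x \<partial>M)"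
    using factor P_pos by (intro integral_cong_AE) (auto elim: eventually_rev_mp)
  finally show "(\<integral>x. b x / ?P x * (G x * of_bool (Z x = z)) \<partial>M) = (\<integral>x. b x * E_X G x \<partial>M)" .
qed

lemma psi_measurable [measurable]:
  assumes [measurable]: "Z \<in> M \<rightarrow>\<^sub>M count_space UNIV" "f \<in> borel_measurable M"
  shows "psi M X MX Z z f \<in> borel_measurable M"
  unfolding psi_def cEev_def PZ_def by measurable

lemma psi_eq_inverse_propensity_form:
  fixes Z :: "'w \<Rightarrow> bool" and f G :: "'w \<Rightarrow> real"
  assumes Z[measurable]: "Z \<in> M \<rightarrow>\<^sub>M count_space UNIV" and P_pos: "AE x in M. 0 < PZ M X MX Z z x"
    and f[measurable]: "f \<in> borel_measurable M" and G: "integrable M G"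
    and fG: "\<forall>x\<in>space M. f x * of_bool (Z x = z) = G x * of_bool (Z x = z)"
    and factor: "AE x in M. E_X (\<lambda>v. G v * of_bool (Z v = z)) x = PZ M X MX Z z x * E_X G x"
  shows "AE x in M. psi M X MX Z z f x
    = (G x - E_X G x) * of_bool (Z x = z) / PZ M X MX Z z x + E_X G x"
proof -
  have "AE x in M. cEev M X MX (\<lambda>v. Z v = z) f x = E_X G x"
    using G by (intro cEev_eq_cE_of_factor[OF Z f _ P_pos fG factor]) auto
  then show ?thesis
    using AE_space
  proof eventually_elim
    case (elim x)
    then show ?case
      using fG by (cases "Z x = z") (auto simp: psi_def)
  qed
qed

lemma integral_mult_psi:
  fixes Z :: "'w \<Rightarrow> bool" and a f G :: "'w \<Rightarrow> real"
  assumes Z[measurable]: "Z \<in> M \<rightarrow>\<^sub>M count_space UNIV" and P_pos: "AE x in M. 0 < PZ M X MX Z z x"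
    and f[measurable]: "f \<in> borel_measurable M" and G: "integrable M G"
    and fG: "\<forall>x\<in>space M. f x * of_bool (Z x = z) = G x * of_bool (Z x = z)"
    and factor: "AE x in M. E_X (\<lambda>v. G v * of_bool (Z v = z)) x = PZ M X MX Z z x * E_X G x"
    and factor_abs: "AE x in M. E_X (\<lambda>v. \<bar>G v\<bar> * of_bool (Z v = z)) x = PZ M X MX Z z x * E_X (\<lambda>v. \<bar>G v\<bar>) x"
    and a[measurable]: "a \<in> borel_measurable sigma_X"
    and bound: "integrable M (\<lambda>x. \<bar>a x\<bar> * E_X (\<lambda>v. \<bar>G v\<bar>) x)"
  shows "integrable M (\<lambda>x. a x * psi M X MX Z z f x)"
    and "(\<integral>x. a x * psi M X MX Z z f x \<partial>M) = (\<integral>x. a x * E_X G x \<partial>M)"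
proof -
  let ?P = "PZ M X MX Z z" and ?Z = "\<lambda>x. of_bool (Z x = z) :: real"
  have [measurable]: "G \<in> borel_measurable M" "a \<in> borel_measurable M"
    using G measurable_from_subalg[OF subalg a] by auto
  have psi_split: "AE x in M. a x * psi M X MX Z z f x
      = a x / ?P x * (G x * ?Z x) - a x * E_X G x / ?P x * (1 * ?Z x) + a x * E_X G x"
    using psi_eq_inverse_propensity_form[OF Z P_pos f G fG factor]
  proof eventually_elim
    case (elim x)
    show ?case unfolding elim by (simp add: divide_inverse algebra_simps)
  qed
  note IPW_G = integral_inverse_propensity_weighting[OF Z P_pos a G factor factor_abs bound]
  have aG: "integrable M (\<lambda>x. a x * E_X G x)"
    using abs_cE_le[OF G]
    by (intro Bochner_Integration.integrable_bound[OF bound]) (auto simp: abs_mult elim!: eventually_mono intro: mult_left_mono)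
  have factor_1: "AE x in M. E_X (\<lambda>v. 1 * ?Z v) x = ?P x * E_X (\<lambda>_. 1) x"
    using cE_const[of 1] by eventually_elim (simp add: PZ_def)
  then have factor_abs_1: "AE x in M. E_X (\<lambda>v. \<bar>1\<bar> * ?Z v) x = ?P x * E_X (\<lambda>_. \<bar>1\<bar>) x"
    by simp
  have bound_1: "integrable M (\<lambda>x. \<bar>a x * E_X G x\<bar> * E_X (\<lambda>_. \<bar>1\<bar>) x)"
    using cE_const[of "\<bar>1\<bar>"] by (intro integrable_cong_AE_imp[OF integrable_abs[OF aG]]) auto
  have "(\<lambda>x. a x * E_X G x) \<in> borel_measurable sigma_X" "integrable M (\<lambda>_. 1 :: real)"
    by auto
  note IPW_1 = integral_inverse_propensity_weighting[OF Z P_pos this factor_1 factor_abs_1 bound_1]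
  have mean_1: "(\<integral>x. a x * E_X G x * E_X (\<lambda>_. 1) x \<partial>M) = (\<integral>x. a x * E_X G x \<partial>M)"
    using cE_const[of 1] by (intro integral_cong_AE) auto
  have "integrable M (\<lambda>x. a x / ?P x * (G x * ?Z x) - a x * E_X G x / ?P x * (1 * ?Z x) + a x * E_X G x)"
    using IPW_G(1) IPW_1(1) aG by auto
  then show "integrable M (\<lambda>x. a x * psi M X MX Z z f x)"
    by (rule integrable_cong_AE_imp[OF _ _ psi_split[THEN AE_symmetric]]) simp
  have "(\<integral>x. a x * psi M X MX Z z f x \<partial>M)
      = (\<integral>x. a x / ?P x * (G x * ?Z x) - a x * E_X G x / ?P x * (1 * ?Z x) + a x * E_X G x \<partial>M)"
    using psi_split by (intro integral_cong_AE) auto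
  also have "\<dots> = (\<integral>x. a x * E_X G x \<partial>M)"
    using IPW_G IPW_1 aG mean_1 by simp
  finally show "(\<integral>x. a x * psi M X MX Z z f x \<partial>M) = (\<integral>x. a x * E_X G x \<partial>M)" .
qed

end

text \<open>\<open>arm_value z h (s\<^sub>0, s\<^sub>1, y\<^sub>0, y\<^sub>1) = h s\<^sub>z y\<^sub>z\<close> is the potential version \<open>h(S\<^sub>z, Y\<^sub>z)\<close> of the
  observed function \<open>h(S, Y)\<close>, as a function of the vector of potential values.\<close>

definition arm_value :: "bool \<Rightarrow> (bool \<Rightarrow> real \<Rightarrow> real) \<Rightarrow> bool \<times> bool \<times> real \<times> real \<Rightarrow> real"
  where "arm_value z h = (\<lambda>(s0, s1, y0, y1). if z then h s1 y1 else h s0 y0)"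

locale principal_strata_model = covariate_conditioning M X MX
  for M :: "'w measure" and X :: "'w \<Rightarrow> 'x" and MX :: "'x measure" +
  fixes Z S1 S0 :: "'w \<Rightarrow> bool" and Y1 Y0 :: "'w \<Rightarrow> real"
  assumes Z_meas [measurable]: "Z \<in> M \<rightarrow>\<^sub>M count_space UNIV"
    and S1_meas [measurable]: "S1 \<in> M \<rightarrow>\<^sub>M count_space UNIV"
    and S0_meas [measurable]: "S0 \<in> M \<rightarrow>\<^sub>M count_space UNIV"
    and Y1_int: "integrable M Y1"
    and Y0_int: "integrable M Y0"
    and A1: "cond_indep M X MX Z (\<lambda>w. (S0 w, S1 w, Y0 w, Y1 w))
               (count_space UNIV \<Otimes>\<^sub>M (count_space UNIV \<Otimes>\<^sub>M (borel \<Otimes>\<^sub>M borel)))"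
    and A2: "\<forall>w\<in>space M. S0 w \<longrightarrow> S1 w"
    and A3_1: "AE w in M. eU M X MX S1 S0 (True, True) w > 0 \<and> eU M X MX S1 S0 (True, False) w > 0 \<longrightarrow>
                 cEev M X MX (\<lambda>v. (S1 v, S0 v) = (True, True)) Y1 w
               = cEev M X MX (\<lambda>v. (S1 v, S0 v) = (True, False)) Y1 w"
    and A3_0: "AE w in M. eU M X MX S1 S0 (False, False) w > 0 \<and> eU M X MX S1 S0 (True, False) w > 0 \<longrightarrow>
                 cEev M X MX (\<lambda>v. (S1 v, S0 v) = (False, False)) Y0 w
               = cEev M X MX (\<lambda>v. (S1 v, S0 v) = (True, False)) Y0 w"
    and overlap: "AE w in M. 0 < PZ M X MX Z True w \<and> PZ M X MX Z True w < 1"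
    and pos_p: "AE w in M. 0 < pz M X MX Z S1 S0 True w \<and> pz M X MX Z S1 S0 False w < 1"
begin

abbreviation potentials :: "'w \<Rightarrow> bool \<times> bool \<times> real \<times> real"
  where "potentials \<equiv> \<lambda>w. (S0 w, S1 w, Y0 w, Y1 w)"

abbreviation potentials_space :: "(bool \<times> bool \<times> real \<times> real) measure"
  where "potentials_space \<equiv> count_space UNIV \<Otimes>\<^sub>M (count_space UNIV \<Otimes>\<^sub>M (borel \<Otimes>\<^sub>M borel))"

abbreviation "e \<equiv> eU M X MX S1 S0"
abbreviation "p \<equiv> pz M X MX Z S1 S0"
abbreviation "mu \<equiv> muzs M X MX Z S1 S0 Y1 Y0"
abbreviation "E_S1 \<equiv> E_X (\<lambda>v. of_bool (S1 v))"
abbreviation "E_S0 \<equiv> E_X (\<lambda>v. of_bool (S0 v))"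
abbreviation "E_Y1_on u \<equiv> E_X (\<lambda>v. Y1 v * of_bool ((S1 v, S0 v) = u))"
abbreviation "E_Y0_on u \<equiv> E_X (\<lambda>v. Y0 v * of_bool ((S1 v, S0 v) = u))"

lemma Y_measurable [measurable]: "Y1 \<in> borel_measurable M" "Y0 \<in> borel_measurable M"
  using Y1_int Y0_int by auto

lemma integrable_Y_mult_of_bool:
  assumes [measurable]: "Measurable.pred M A"
  shows "integrable M (\<lambda>w. Y1 w * of_bool (A w))" "integrable M (\<lambda>w. Y0 w * of_bool (A w))"
    and "integrable M (\<lambda>w. Y1 w * (1 - of_bool (A w)))" "integrable M (\<lambda>w. Y0 w * (1 - of_bool (A w)))"
  by (rule Bochner_Integration.integrable_bound[OF Y1_int] Bochner_Integration.integrable_bound[OF Y0_int];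
      simp)+

lemma integrable_of_bool [simp]: "Measurable.pred M A \<Longrightarrow> integrable M (\<lambda>w. of_bool (A w) :: real)"
  by (intro integrable_const_bound[where B=1]) auto

lemma PZ_pos: "AE w in M. 0 < PZ M X MX Z z w"
proof (cases z)
  case False
  then have [simp]: "z = False" by simp
  have "AE w in M. E_X (\<lambda>v. of_bool (Z v = False)) w = E_X (\<lambda>v. 1 - of_bool (Z v = True)) w"
    by (rule cE_cong) auto
  moreover have "AE w in M. E_X (\<lambda>v. 1 - of_bool (Z v = True)) w = 1 - E_X (\<lambda>v. of_bool (Z v = True)) w"
    by (rule cE_one_minus) simp
  ultimately show ?thesis using overlap
    unfolding PZ_def by eventually_elim auto
qed (use overlap in auto)

lemma cE_treatment_factor:
  assumes "g \<in> borel_measurable potentials_space" "integrable M (\<lambda>w. g (potentials w))"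
    and "\<And>w. g (potentials w) = G w"
  shows "AE w in M. E_X (\<lambda>v. G v * of_bool (Z v = z)) w = PZ M X MX Z z w * E_X G w"
proof -
  have "potentials \<in> M \<rightarrow>\<^sub>M potentials_space"
    by measurable
  from cond_indep_cE_factor[OF A1 this Z_meas assms(1,2)] assms(3) show ?thesis
    by simp
qed

lemma p1_eq_E_S1: "AE w in M. p True w = E_S1 w"
  and p0_eq_E_S0: "AE w in M. p False w = E_S0 w"
proof -
  have "AE w in M. E_X (\<lambda>v. of_bool (S1 v) * of_bool (Z v = True)) w = PZ M X MX Z True w * E_S1 w"
    by (rule cE_treatment_factor[of "\<lambda>(s0, s1, y0, y1). of_bool s1"]) auto
  then show "AE w in M. p True w = E_S1 w"
    unfolding pz_def by (intro cEev_eq_cE_of_factor[OF Z_meas _ _ PZ_pos]) (auto simp: obsS_def)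
  have "AE w in M. E_X (\<lambda>v. of_bool (S0 v) * of_bool (Z v = False)) w = PZ M X MX Z False w * E_S0 w"
    by (rule cE_treatment_factor[of "\<lambda>(s0, s1, y0, y1). of_bool s0"]) auto
  then show "AE w in M. p False w = E_S0 w"
    unfolding pz_def by (intro cEev_eq_cE_of_factor[OF Z_meas _ _ PZ_pos]) (auto simp: obsS_def)
qed

lemma E_S_bounds: "AE w in M. 0 < E_S1 w \<and> E_S0 w < 1"
  using pos_p p1_eq_E_S1 p0_eq_E_S0 by eventually_elim auto

lemma E_S_unit_interval: "AE w in M. 0 \<le> E_S1 w \<and> E_S1 w \<le> 1 \<and> 0 \<le> E_S0 w \<and> E_S0 w \<le> 1"
  using cE_unit_interval[of "\<lambda>v. of_bool (S1 v)"] cE_unit_interval[of "\<lambda>v. of_bool (S0 v)"]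
  by simp

lemma e_unit_interval: "AE w in M. 0 \<le> e u w \<and> e u w \<le> 1"
  unfolding eU_def by (rule cE_unit_interval) auto

lemma e11_eq_E_S0: "AE w in M. e (True, True) w = E_S0 w"
  unfolding eU_def by (rule cE_cong) (use A2 in auto)

lemma strata_S1:
  "AE w in M. 0 \<le> e (True, True) w \<and> 0 \<le> e (True, False) w \<and> e (True, True) w + e (True, False) w = E_S1 w"
proof -
  have "AE w in M. E_S1 w = E_X (\<lambda>v. of_bool ((S1 v, S0 v) = (True, True)) + of_bool ((S1 v, S0 v) = (True, False))) w"
    by (rule cE_cong) auto
  moreover have "AE w in M. E_X (\<lambda>v. of_bool ((S1 v, S0 v) = (True, True)) + of_bool ((S1 v, S0 v) = (True, False))) w
      = e (True, True) w + e (True, False) w"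
    unfolding eU_def by (rule cE_add) auto
  ultimately show ?thesis
    using e_unit_interval[of "(True, True)"] e_unit_interval[of "(True, False)"] by eventually_elim auto
qed

lemma strata_not_S0:
  "AE w in M. 0 \<le> e (False, False) w \<and> 0 \<le> e (True, False) w \<and> e (False, False) w + e (True, False) w = 1 - E_S0 w"
proof -
  have "AE w in M. E_X (\<lambda>v. 1 - of_bool (S0 v)) w
      = E_X (\<lambda>v. of_bool ((S1 v, S0 v) = (False, False)) + of_bool ((S1 v, S0 v) = (True, False))) w"
    by (rule cE_cong) (use A2 in auto)
  moreover have "AE w in M. E_X (\<lambda>v. of_bool ((S1 v, S0 v) = (False, False)) + of_bool ((S1 v, S0 v) = (True, False))) w
      = e (False, False) w + e (True, False) w"
    unfolding eU_def by (rule cE_add) auto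
  moreover have "AE w in M. E_X (\<lambda>v. 1 - of_bool (S0 v)) w = 1 - E_S0 w"
    by (rule cE_one_minus) simp
  ultimately show ?thesis
    using e_unit_interval[of "(False, False)"] e_unit_interval[of "(True, False)"] by eventually_elim auto
qed

lemma E_S0_le_E_S1: "AE w in M. E_S0 w \<le> E_S1 w"
  using strata_S1 e11_eq_E_S0 by eventually_elim auto

lemma mu11_eq: "AE w in M. mu True True w = E_X (\<lambda>v. Y1 v * of_bool (S1 v)) w / E_S1 w"
proof -
  have "AE w in M. E_X (\<lambda>v. obsY Z Y1 Y0 v * of_bool (Z v = True \<and> obsS Z S1 S0 v = True)) w
      = E_X (\<lambda>v. Y1 v * of_bool (S1 v) * of_bool (Z v = True)) w"
    by (rule cE_cong) (auto simp: obsY_def obsS_def)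
  moreover have "AE w in M. E_X (\<lambda>v. of_bool (Z v = True \<and> obsS Z S1 S0 v = True)) w
      = E_X (\<lambda>v. of_bool (S1 v) * of_bool (Z v = True)) w"
    by (rule cE_cong) (auto simp: obsS_def)
  moreover have "AE w in M. E_X (\<lambda>v. Y1 v * of_bool (S1 v) * of_bool (Z v = True)) w
      = PZ M X MX Z True w * E_X (\<lambda>v. Y1 v * of_bool (S1 v)) w"
    by (rule cE_treatment_factor[of "\<lambda>(s0, s1, y0, y1). y1 * of_bool s1"]) (auto intro: integrable_Y_mult_of_bool)
  moreover have "AE w in M. E_X (\<lambda>v. of_bool (S1 v) * of_bool (Z v = True)) w = PZ M X MX Z True w * E_S1 w"
    by (rule cE_treatment_factor[of "\<lambda>(s0, s1, y0, y1). of_bool s1"]) auto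
  ultimately show ?thesis
    using PZ_pos[of True] by eventually_elim (simp add: muzs_def cEev_def)
qed

lemma mu00_eq: "AE w in M. mu False False w = E_X (\<lambda>v. Y0 v * (1 - of_bool (S0 v))) w / (1 - E_S0 w)"
proof -
  have "AE w in M. E_X (\<lambda>v. obsY Z Y1 Y0 v * of_bool (Z v = False \<and> obsS Z S1 S0 v = False)) w
      = E_X (\<lambda>v. Y0 v * (1 - of_bool (S0 v)) * of_bool (Z v = False)) w"
    by (rule cE_cong) (auto simp: obsY_def obsS_def)
  moreover have "AE w in M. E_X (\<lambda>v. of_bool (Z v = False \<and> obsS Z S1 S0 v = False)) w
      = E_X (\<lambda>v. (1 - of_bool (S0 v)) * of_bool (Z v = False)) w"
    by (rule cE_cong) (auto simp: obsS_def)
  moreover have "AE w in M. E_X (\<lambda>v. Y0 v * (1 - of_bool (S0 v)) * of_bool (Z v = False)) w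
      = PZ M X MX Z False w * E_X (\<lambda>v. Y0 v * (1 - of_bool (S0 v))) w"
    by (rule cE_treatment_factor[of "\<lambda>(s0, s1, y0, y1). y0 * (1 - of_bool s0)"])
      (auto intro: integrable_Y_mult_of_bool)
  moreover have "AE w in M. E_X (\<lambda>v. (1 - of_bool (S0 v)) * of_bool (Z v = False)) w
      = PZ M X MX Z False w * E_X (\<lambda>v. 1 - of_bool (S0 v)) w"
    by (rule cE_treatment_factor[of "\<lambda>(s0, s1, y0, y1). 1 - of_bool s0"]) auto
  moreover have "AE w in M. E_X (\<lambda>v. 1 - of_bool (S0 v)) w = 1 - E_S0 w"
    by (rule cE_one_minus) simp
  ultimately show ?thesis
    using PZ_pos[of False] by eventually_elim (simp add: muzs_def cEev_def)
qed

lemma E_Y1_S1_split: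
  "AE w in M. E_X (\<lambda>v. Y1 v * of_bool (S1 v)) w = E_Y1_on (True, True) w + E_Y1_on (True, False) w"
proof -
  have "AE w in M. E_X (\<lambda>v. Y1 v * of_bool (S1 v)) w
      = E_X (\<lambda>v. Y1 v * of_bool ((S1 v, S0 v) = (True, True)) + Y1 v * of_bool ((S1 v, S0 v) = (True, False))) w"
    by (rule cE_cong) auto
  moreover have "AE w in M. E_X (\<lambda>v. Y1 v * of_bool ((S1 v, S0 v) = (True, True))
        + Y1 v * of_bool ((S1 v, S0 v) = (True, False))) w
      = E_Y1_on (True, True) w + E_Y1_on (True, False) w"
    by (rule cE_add) (auto intro: integrable_Y_mult_of_bool)
  ultimately show ?thesis by eventually_elim simp
qed

lemma E_Y0_not_S0_split:
  "AE w in M. E_X (\<lambda>v. Y0 v * (1 - of_bool (S0 v))) w = E_Y0_on (False, False) w + E_Y0_on (True, False) w"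
proof -
  have "AE w in M. E_X (\<lambda>v. Y0 v * (1 - of_bool (S0 v))) w
      = E_X (\<lambda>v. Y0 v * of_bool ((S1 v, S0 v) = (False, False)) + Y0 v * of_bool ((S1 v, S0 v) = (True, False))) w"
    by (rule cE_cong) auto
  moreover have "AE w in M. E_X (\<lambda>v. Y0 v * of_bool ((S1 v, S0 v) = (False, False))
        + Y0 v * of_bool ((S1 v, S0 v) = (True, False))) w
      = E_Y0_on (False, False) w + E_Y0_on (True, False) w"
    by (rule cE_add) (auto intro: integrable_Y_mult_of_bool)
  ultimately show ?thesis by eventually_elim simp
qed

lemma E_Y1_on_null: "AE w in M. e u w = 0 \<longrightarrow> E_Y1_on u w = 0"
  and E_Y0_on_null: "AE w in M. e u w = 0 \<longrightarrow> E_Y0_on u w = 0"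
  unfolding eU_def by (rule cE_mult_event_eq_0[OF Y1_int] cE_mult_event_eq_0[OF Y0_int]; simp)+

lemma E_Y1_on_shares:
  "AE w in M. e (True, True) w / E_S1 w * E_X (\<lambda>v. Y1 v * of_bool (S1 v)) w = E_Y1_on (True, True) w
    \<and> e (True, False) w / E_S1 w * E_X (\<lambda>v. Y1 v * of_bool (S1 v)) w = E_Y1_on (True, False) w"
  using strata_S1 E_Y1_S1_split A3_1
    E_Y1_on_null[of "(True, True)"] E_Y1_on_null[of "(True, False)"]
proof eventually_elim
  case (elim w)
  then show ?case
    using mixture_share[of "e (True, True) w" "e (True, False) w" "E_Y1_on (True, True) w" "E_Y1_on (True, False) w"]
      mixture_share[of "e (True, False) w" "e (True, True) w" "E_Y1_on (True, False) w" "E_Y1_on (True, True) w"]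
    by (simp add: cEev_def eU_def add.commute)
qed

lemma E_Y0_on_shares:
  "AE w in M. e (False, False) w / (1 - E_S0 w) * E_X (\<lambda>v. Y0 v * (1 - of_bool (S0 v))) w = E_Y0_on (False, False) w
    \<and> e (True, False) w / (1 - E_S0 w) * E_X (\<lambda>v. Y0 v * (1 - of_bool (S0 v))) w = E_Y0_on (True, False) w"
  using strata_not_S0 E_Y0_not_S0_split A3_0
    E_Y0_on_null[of "(False, False)"] E_Y0_on_null[of "(True, False)"]
proof eventually_elim
  case (elim w)
  then show ?case
    using mixture_share[of "e (False, False) w" "e (True, False) w" "E_Y0_on (False, False) w" "E_Y0_on (True, False) w"]
      mixture_share[of "e (True, False) w" "e (False, False) w" "E_Y0_on (True, False) w" "E_Y0_on (False, False) w"]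
    by (simp add: cEev_def eU_def add.commute)
qed

lemma observed_eq_arm_value:
  "f = (\<lambda>w. h (obsS Z S1 S0 w) (obsY Z Y1 Y0 w)) \<Longrightarrow>
    \<forall>w\<in>space M. f w * of_bool (Z w = z) = arm_value z h (potentials w) * of_bool (Z w = z)"
  by (auto simp: arm_value_def obsS_def obsY_def)

lemma arm_value_measurable [measurable]:
  "arm_value z (\<lambda>s y. y * of_bool s) \<in> borel_measurable potentials_space"
  "arm_value z (\<lambda>s y. y * (1 - of_bool s)) \<in> borel_measurable potentials_space"
  "arm_value z (\<lambda>s y. of_bool s) \<in> borel_measurable potentials_space"
  "arm_value z (\<lambda>s y. 1 - of_bool s) \<in> borel_measurable potentials_space"
  unfolding arm_value_def by measurable

lemma integral_weighted_psi:
  fixes h :: "bool \<Rightarrow> real \<Rightarrow> real" and f a :: "'w \<Rightarrow> real"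
  assumes h: "arm_value z h \<in> borel_measurable potentials_space"
      "integrable M (\<lambda>w. arm_value z h (potentials w))"
    and f: "f \<in> borel_measurable M" "f = (\<lambda>w. h (obsS Z S1 S0 w) (obsY Z Y1 Y0 w))"
    and a: "a \<in> borel_measurable sigma_X"
      "integrable M (\<lambda>w. \<bar>a w\<bar> * E_X (\<lambda>v. \<bar>arm_value z h (potentials v)\<bar>) w)"
  shows "integrable M (\<lambda>w. a w * psi M X MX Z z f w)"
    and "(\<integral>w. a w * psi M X MX Z z f w \<partial>M) = (\<integral>w. a w * E_X (\<lambda>v. arm_value z h (potentials v)) w \<partial>M)"
proof -
  have "AE w in M. E_X (\<lambda>v. \<bar>arm_value z h (potentials v)\<bar> * of_bool (Z v = z)) w
      = PZ M X MX Z z w * E_X (\<lambda>v. \<bar>arm_value z h (potentials v)\<bar>) w"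
    using h by (intro cE_treatment_factor[of "\<lambda>p. \<bar>arm_value z h p\<bar>"]) auto
  note psi = integral_mult_psi[OF Z_meas PZ_pos f(1) h(2) observed_eq_arm_value[OF f(2)]
      cE_treatment_factor[OF h refl] this a]
  show "integrable M (\<lambda>w. a w * psi M X MX Z z f w)"
    by (rule psi(1))
  show "(\<integral>w. a w * psi M X MX Z z f w \<partial>M) = (\<integral>w. a w * E_X (\<lambda>v. arm_value z h (potentials v)) w \<partial>M)"
    by (rule psi(2))
qed

lemma integral_psi:
  fixes h :: "bool \<Rightarrow> real \<Rightarrow> real" and f :: "'w \<Rightarrow> real"
  assumes h: "arm_value z h \<in> borel_measurable potentials_space"
      "integrable M (\<lambda>w. arm_value z h (potentials w))"
    and f: "f \<in> borel_measurable M" "f = (\<lambda>w. h (obsS Z S1 S0 w) (obsY Z Y1 Y0 w))"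
  shows "integrable M (psi M X MX Z z f)"
    and "(\<integral>w. psi M X MX Z z f w \<partial>M) = (\<integral>w. arm_value z h (potentials w) \<partial>M)"
  using integral_weighted_psi[OF h f, of "\<lambda>_. 1"] cE_int[OF h(2)]
    cE_int(1)[OF integrable_abs[OF h(2)]]
  by auto

lemma integral_bounded_weight_psi:
  fixes h :: "bool \<Rightarrow> real \<Rightarrow> real" and f a :: "'w \<Rightarrow> real"
  assumes h: "arm_value z h \<in> borel_measurable potentials_space"
      "integrable M (\<lambda>w. arm_value z h (potentials w))"
    and f: "f \<in> borel_measurable M" "f = (\<lambda>w. h (obsS Z S1 S0 w) (obsY Z Y1 Y0 w))"
    and a: "a \<in> borel_measurable sigma_X" "AE w in M. \<bar>a w\<bar> \<le> 1"
  shows "integrable M (\<lambda>w. a w * psi M X MX Z z f w)"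
    and "(\<integral>w. a w * psi M X MX Z z f w \<partial>M) = (\<integral>w. a w * E_X (\<lambda>v. arm_value z h (potentials v)) w \<partial>M)"
proof -
  have [measurable]: "a \<in> borel_measurable M"
    using measurable_from_subalg[OF subalg a(1)] .
  have "AE w in M. norm (\<bar>a w\<bar> * E_X (\<lambda>v. \<bar>arm_value z h (potentials v)\<bar>) w)
      \<le> norm (E_X (\<lambda>v. \<bar>arm_value z h (potentials v)\<bar>) w)"
    using a(2) by eventually_elim (simp add: abs_mult mult_left_le_one_le)
  then have "integrable M (\<lambda>w. \<bar>a w\<bar> * E_X (\<lambda>v. \<bar>arm_value z h (potentials v)\<bar>) w)"
    by (rule Bochner_Integration.integrable_bound[OF cE_int(1)[OF integrable_abs[OF h(2)]], rotated])
      measurable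
  then show "integrable M (\<lambda>w. a w * psi M X MX Z z f w)"
    and "(\<integral>w. a w * psi M X MX Z z f w \<partial>M) = (\<integral>w. a w * E_X (\<lambda>v. arm_value z h (potentials v)) w \<partial>M)"
    using integral_weighted_psi[OF h f a(1)] by auto
qed

lemma integral_dominated_weight_psi:
  fixes h :: "bool \<Rightarrow> real \<Rightarrow> real" and f a b :: "'w \<Rightarrow> real"
  assumes h: "arm_value z h \<in> borel_measurable potentials_space"
      "integrable M (\<lambda>w. arm_value z h (potentials w))"
    and f: "f \<in> borel_measurable M" "f = (\<lambda>w. h (obsS Z S1 S0 w) (obsY Z Y1 Y0 w))"
    and a: "a \<in> borel_measurable sigma_X"
    and b: "integrable M b" "AE w in M. \<bar>a w\<bar> * E_X (\<lambda>v. \<bar>arm_value z h (potentials v)\<bar>) w \<le> b w"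
  shows "integrable M (\<lambda>w. a w * psi M X MX Z z f w)"
    and "(\<integral>w. a w * psi M X MX Z z f w \<partial>M) = (\<integral>w. a w * E_X (\<lambda>v. arm_value z h (potentials v)) w \<partial>M)"
proof -
  have [measurable]: "a \<in> borel_measurable M"
    using measurable_from_subalg[OF subalg a] .
  have "AE w in M. 0 \<le> E_X (\<lambda>v. \<bar>arm_value z h (potentials v)\<bar>) w"
    using h(1) by (intro cE_nonneg) auto
  with b(2) have "AE w in M. norm (\<bar>a w\<bar> * E_X (\<lambda>v. \<bar>arm_value z h (potentials v)\<bar>) w) \<le> norm (b w)"
    by eventually_elim (simp add: abs_mult)
  then have "integrable M (\<lambda>w. \<bar>a w\<bar> * E_X (\<lambda>v. \<bar>arm_value z h (potentials v)\<bar>) w)"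
    by (rule Bochner_Integration.integrable_bound[OF b(1), rotated]) measurable
  then show "integrable M (\<lambda>w. a w * psi M X MX Z z f w)"
    and "(\<integral>w. a w * psi M X MX Z z f w \<partial>M) = (\<integral>w. a w * E_X (\<lambda>v. arm_value z h (potentials v)) w \<partial>M)"
    using integral_weighted_psi[OF h f a] by auto
qed

lemma nuisance_measurable [measurable]:
  "e u \<in> borel_measurable sigma_X" "p z \<in> borel_measurable sigma_X" "mu z s \<in> borel_measurable sigma_X"
  "e u \<in> borel_measurable M" "p z \<in> borel_measurable M" "mu z s \<in> borel_measurable M"
  unfolding eU_def pz_def muzs_def cEev_def by measurable

lemma observed_measurable [measurable]:
  "fYS Z S1 S0 Y1 Y0 \<in> borel_measurable M" "fY1mS Z S1 S0 Y1 Y0 \<in> borel_measurable M"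
  "fS Z S1 S0 \<in> borel_measurable M" "f1mS Z S1 S0 \<in> borel_measurable M"
  unfolding fYS_def fY1mS_def fS_def f1mS_def obsY_def obsS_def by measurable

lemma arm_value_integrable:
  "integrable M (\<lambda>w. arm_value z (\<lambda>s y. y * of_bool s) (potentials w))"
  "integrable M (\<lambda>w. arm_value z (\<lambda>s y. y * (1 - of_bool s)) (potentials w))"
  "integrable M (\<lambda>w. arm_value z (\<lambda>s y. of_bool s) (potentials w))"
  "integrable M (\<lambda>w. arm_value z (\<lambda>s y. 1 - of_bool s) (potentials w))"
  by (cases z; simp add: arm_value_def integrable_Y_mult_of_bool)+

lemma integral_share_psi_YS:
  assumes u: "u \<in> {(True, True), (True, False)}"
  shows "integrable M (\<lambda>w. e u w / p True w * psi M X MX Z True (fYS Z S1 S0 Y1 Y0) w)"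
    and "(\<integral>w. e u w / p True w * psi M X MX Z True (fYS Z S1 S0 Y1 Y0) w \<partial>M) = (\<integral>w. E_Y1_on u w \<partial>M)"
proof -
  have "AE w in M. 0 \<le> e u w \<and> e u w \<le> E_S1 w
      \<and> e u w / E_S1 w * E_X (\<lambda>v. Y1 v * of_bool (S1 v)) w = E_Y1_on u w"
    using strata_S1 E_Y1_on_shares
  proof eventually_elim
    case (elim w)
    with u show ?case by auto
  qed
  with p1_eq_E_S1 E_S_bounds have weight: "AE w in M. \<bar>e u w / p True w\<bar> \<le> 1
      \<and> e u w / p True w * E_X (\<lambda>v. Y1 v * of_bool (S1 v)) w = E_Y1_on u w"
    by eventually_elim (simp add: divide_le_eq_1)
  then have "AE w in M. \<bar>e u w / p True w\<bar> \<le> 1"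
    by eventually_elim simp
  note psi = integral_bounded_weight_psi[OF arm_value_measurable(1) arm_value_integrable(1)
      observed_measurable(1) fYS_def _ this]
  show "integrable M (\<lambda>w. e u w / p True w * psi M X MX Z True (fYS Z S1 S0 Y1 Y0) w)"
    by (rule psi(1)) measurable
  show "(\<integral>w. e u w / p True w * psi M X MX Z True (fYS Z S1 S0 Y1 Y0) w \<partial>M) = (\<integral>w. E_Y1_on u w \<partial>M)"
    using weight by (subst psi(2), measurable, intro integral_cong_AE)
      (auto simp: arm_value_def elim: eventually_mono)
qed

lemma integral_share_psi_Y_not_S:
  assumes u: "u \<in> {(False, False), (True, False)}"
  shows "integrable M (\<lambda>w. e u w / (1 - p False w) * psi M X MX Z False (fY1mS Z S1 S0 Y1 Y0) w)"
    and "(\<integral>w. e u w / (1 - p False w) * psi M X MX Z False (fY1mS Z S1 S0 Y1 Y0) w \<partial>M)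
      = (\<integral>w. E_Y0_on u w \<partial>M)"
proof -
  have "AE w in M. 0 \<le> e u w \<and> e u w \<le> 1 - E_S0 w
      \<and> e u w / (1 - E_S0 w) * E_X (\<lambda>v. Y0 v * (1 - of_bool (S0 v))) w = E_Y0_on u w"
    using strata_not_S0 E_Y0_on_shares
  proof eventually_elim
    case (elim w)
    with u show ?case by auto
  qed
  with p0_eq_E_S0 E_S_bounds have weight: "AE w in M. \<bar>e u w / (1 - p False w)\<bar> \<le> 1
      \<and> e u w / (1 - p False w) * E_X (\<lambda>v. Y0 v * (1 - of_bool (S0 v))) w = E_Y0_on u w"
    by eventually_elim (simp add: divide_le_eq_1)
  then have "AE w in M. \<bar>e u w / (1 - p False w)\<bar> \<le> 1"
    by eventually_elim simp
  note psi = integral_bounded_weight_psi[OF arm_value_measurable(2) arm_value_integrable(2)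
      observed_measurable(2) fY1mS_def _ this]
  show "integrable M (\<lambda>w. e u w / (1 - p False w) * psi M X MX Z False (fY1mS Z S1 S0 Y1 Y0) w)"
    by (rule psi(1)) measurable
  show "(\<integral>w. e u w / (1 - p False w) * psi M X MX Z False (fY1mS Z S1 S0 Y1 Y0) w \<partial>M)
      = (\<integral>w. E_Y0_on u w \<partial>M)"
    using weight by (subst psi(2), measurable, intro integral_cong_AE)
      (auto simp: arm_value_def elim: eventually_mono)
qed

lemma mu11_bound: "AE w in M. \<bar>mu True True w\<bar> * E_S0 w \<le> \<bar>E_X (\<lambda>v. Y1 v * of_bool (S1 v)) w\<bar>"
  using mu11_eq E_S_bounds E_S0_le_E_S1 E_S_unit_interval
proof eventually_elim
  case (elim w)
  then have "\<bar>mu True True w\<bar> * E_S0 w = \<bar>E_X (\<lambda>v. Y1 v * of_bool (S1 v)) w\<bar> * (E_S0 w / E_S1 w)"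
    by (simp add: abs_divide)
  also have "\<dots> \<le> \<bar>E_X (\<lambda>v. Y1 v * of_bool (S1 v)) w\<bar>"
    using elim by (intro mult_left_le) (auto simp: divide_le_eq_1)
  finally show ?case .
qed

lemma mu00_bound:
  "AE w in M. \<bar>mu False False w\<bar> * (1 - E_S1 w) \<le> \<bar>E_X (\<lambda>v. Y0 v * (1 - of_bool (S0 v))) w\<bar>"
  using mu00_eq E_S_bounds E_S0_le_E_S1 E_S_unit_interval
proof eventually_elim
  case (elim w)
  then have "\<bar>mu False False w\<bar> * (1 - E_S1 w)
      = \<bar>E_X (\<lambda>v. Y0 v * (1 - of_bool (S0 v))) w\<bar> * ((1 - E_S1 w) / (1 - E_S0 w))"
    by (simp add: abs_divide)
  also have "\<dots> \<le> \<bar>E_X (\<lambda>v. Y0 v * (1 - of_bool (S0 v))) w\<bar>"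
    using elim by (intro mult_left_le) (auto simp: divide_le_eq_1)
  finally show ?case .
qed

lemma cE_abs_arm_value_S:
  shows "AE w in M. E_X (\<lambda>v. \<bar>arm_value z (\<lambda>s y. of_bool s) (potentials v)\<bar>) w = (if z then E_S1 w else E_S0 w)"
    and "AE w in M. E_X (\<lambda>v. \<bar>arm_value z (\<lambda>s y. 1 - of_bool s) (potentials v)\<bar>) w
      = (if z then 1 - E_S1 w else 1 - E_S0 w)"
proof -
  show "AE w in M. E_X (\<lambda>v. \<bar>arm_value z (\<lambda>s y. of_bool s) (potentials v)\<bar>) w = (if z then E_S1 w else E_S0 w)"
    by (cases z) (auto simp: arm_value_def)
  have "AE w in M. E_X (\<lambda>v. \<bar>arm_value z (\<lambda>s y. 1 - of_bool s) (potentials v)\<bar>) w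
      = E_X (\<lambda>v. 1 - of_bool (if z then S1 v else S0 v)) w"
    by (rule cE_cong) (auto simp: arm_value_def)
  moreover have "AE w in M. E_X (\<lambda>v. 1 - of_bool (if z then S1 v else S0 v)) w
      = 1 - E_X (\<lambda>v. of_bool (if z then S1 v else S0 v)) w"
    by (rule cE_one_minus) simp
  ultimately show "AE w in M. E_X (\<lambda>v. \<bar>arm_value z (\<lambda>s y. 1 - of_bool s) (potentials v)\<bar>) w
      = (if z then 1 - E_S1 w else 1 - E_S0 w)"
    by eventually_elim (cases z; simp)
qed

lemma integral_mu11_psi_S:
  shows "integrable M (\<lambda>w. mu True True w * psi M X MX Z False (fS Z S1 S0) w)"
    and "(\<integral>w. mu True True w * psi M X MX Z False (fS Z S1 S0) w \<partial>M) = (\<integral>w. mu True True w * E_S0 w \<partial>M)"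
proof -
  have "AE w in M. \<bar>mu True True w\<bar> * E_X (\<lambda>v. \<bar>arm_value False (\<lambda>s y. of_bool s) (potentials v)\<bar>) w
      \<le> \<bar>E_X (\<lambda>v. Y1 v * of_bool (S1 v)) w\<bar>"
    using mu11_bound cE_abs_arm_value_S(1)[of False] by eventually_elim simp
  note psi = integral_dominated_weight_psi[OF arm_value_measurable(3) arm_value_integrable(3)
      observed_measurable(3) fS_def _ integrable_abs[OF cE_int(1)] this]
  show "integrable M (\<lambda>w. mu True True w * psi M X MX Z False (fS Z S1 S0) w)"
    by (rule psi(1)) (auto simp: integrable_Y_mult_of_bool)
  show "(\<integral>w. mu True True w * psi M X MX Z False (fS Z S1 S0) w \<partial>M) = (\<integral>w. mu True True w * E_S0 w \<partial>M)"
    by (subst psi(2)) (auto simp: integrable_Y_mult_of_bool arm_value_def)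
qed

lemma integral_mu11_ratio_psi_S:
  shows "integrable M (\<lambda>w. mu True True w * (p False w / p True w) * psi M X MX Z True (fS Z S1 S0) w)"
    and "(\<integral>w. mu True True w * (p False w / p True w) * psi M X MX Z True (fS Z S1 S0) w \<partial>M)
      = (\<integral>w. mu True True w * E_S0 w \<partial>M)"
proof -
  have ratio: "AE w in M. mu True True w * (p False w / p True w) * E_S1 w = mu True True w * E_S0 w"
    using p1_eq_E_S1 p0_eq_E_S0 E_S_bounds by eventually_elim simp
  have "AE w in M. \<bar>mu True True w * (p False w / p True w)\<bar>
        * E_X (\<lambda>v. \<bar>arm_value True (\<lambda>s y. of_bool s) (potentials v)\<bar>) w
      \<le> \<bar>E_X (\<lambda>v. Y1 v * of_bool (S1 v)) w\<bar>"
    using mu11_bound cE_abs_arm_value_S(1)[of True] ratio E_S_unit_interval E_S_bounds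
  proof eventually_elim
    case (elim w)
    have "\<bar>mu True True w * (p False w / p True w)\<bar> * E_S1 w
        = \<bar>mu True True w * (p False w / p True w) * E_S1 w\<bar>"
      using elim(5) by (simp add: abs_mult)
    also have "\<dots> = \<bar>mu True True w\<bar> * E_S0 w"
      using elim(3,4) by (simp add: abs_mult)
    finally show ?case
      using elim(1,2) by simp
  qed
  note psi = integral_dominated_weight_psi[OF arm_value_measurable(3) arm_value_integrable(3)
      observed_measurable(3) fS_def _ integrable_abs[OF cE_int(1)] this]
  show "integrable M (\<lambda>w. mu True True w * (p False w / p True w) * psi M X MX Z True (fS Z S1 S0) w)"
    by (rule psi(1)) (auto simp: integrable_Y_mult_of_bool)
  show "(\<integral>w. mu True True w * (p False w / p True w) * psi M X MX Z True (fS Z S1 S0) w \<partial>M)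
      = (\<integral>w. mu True True w * E_S0 w \<partial>M)"
  proof (subst psi(2))
    show "(\<integral>w. mu True True w * (p False w / p True w)
          * E_X (\<lambda>v. arm_value True (\<lambda>s y. of_bool s) (potentials v)) w \<partial>M)
        = (\<integral>w. mu True True w * E_S0 w \<partial>M)"
      unfolding arm_value_def by (rule integral_cong_AE) (use ratio in simp_all)
  qed (auto simp: integrable_Y_mult_of_bool)
qed

lemma integral_mu00_psi_not_S:
  shows "integrable M (\<lambda>w. mu False False w * psi M X MX Z True (f1mS Z S1 S0) w)"
    and "(\<integral>w. mu False False w * psi M X MX Z True (f1mS Z S1 S0) w \<partial>M)
      = (\<integral>w. mu False False w * (1 - E_S1 w) \<partial>M)"
proof -
  have "AE w in M. \<bar>mu False False w\<bar> * E_X (\<lambda>v. \<bar>arm_value True (\<lambda>s y. 1 - of_bool s) (potentials v)\<bar>) w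
      \<le> \<bar>E_X (\<lambda>v. Y0 v * (1 - of_bool (S0 v))) w\<bar>"
    using mu00_bound cE_abs_arm_value_S(2)[of True] by eventually_elim simp
  note psi = integral_dominated_weight_psi[OF arm_value_measurable(4) arm_value_integrable(4)
      observed_measurable(4) f1mS_def _ integrable_abs[OF cE_int(1)] this]
  show "integrable M (\<lambda>w. mu False False w * psi M X MX Z True (f1mS Z S1 S0) w)"
    by (rule psi(1)) (auto simp: integrable_Y_mult_of_bool)
  show "(\<integral>w. mu False False w * psi M X MX Z True (f1mS Z S1 S0) w \<partial>M)
      = (\<integral>w. mu False False w * (1 - E_S1 w) \<partial>M)"
  proof (subst psi(2))
    have "AE w in M. E_X (\<lambda>v. 1 - of_bool (S1 v)) w = 1 - E_S1 w"
      by (rule cE_one_minus) simp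
    then have "AE w in M. mu False False w * E_X (\<lambda>v. arm_value True (\<lambda>s y. 1 - of_bool s) (potentials v)) w
        = mu False False w * (1 - E_S1 w)"
      by eventually_elim (simp add: arm_value_def)
    then show "(\<integral>w. mu False False w * E_X (\<lambda>v. arm_value True (\<lambda>s y. 1 - of_bool s) (potentials v)) w \<partial>M)
        = (\<integral>w. mu False False w * (1 - E_S1 w) \<partial>M)"
      by (rule integral_cong_AE[rotated 2]) measurable
  qed (auto simp: integrable_Y_mult_of_bool)
qed

lemma integral_mu00_ratio_psi_not_S:
  shows "integrable M (\<lambda>w. mu False False w * ((1 - p True w) / (1 - p False w))
      * psi M X MX Z False (f1mS Z S1 S0) w)"
    and "(\<integral>w. mu False False w * ((1 - p True w) / (1 - p False w)) * psi M X MX Z False (f1mS Z S1 S0) w \<partial>M)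
      = (\<integral>w. mu False False w * (1 - E_S1 w) \<partial>M)"
proof -
  have ratio: "AE w in M. mu False False w * ((1 - p True w) / (1 - p False w)) * (1 - E_S0 w)
      = mu False False w * (1 - E_S1 w)"
    using p1_eq_E_S1 p0_eq_E_S0 E_S_bounds by eventually_elim simp
  have "AE w in M. \<bar>mu False False w * ((1 - p True w) / (1 - p False w))\<bar>
        * E_X (\<lambda>v. \<bar>arm_value False (\<lambda>s y. 1 - of_bool s) (potentials v)\<bar>) w
      \<le> \<bar>E_X (\<lambda>v. Y0 v * (1 - of_bool (S0 v))) w\<bar>"
    using mu00_bound cE_abs_arm_value_S(2)[of False] ratio E_S_unit_interval
  proof eventually_elim
    case (elim w)
    have "\<bar>mu False False w * ((1 - p True w) / (1 - p False w))\<bar> * (1 - E_S0 w)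
        = \<bar>mu False False w * ((1 - p True w) / (1 - p False w)) * (1 - E_S0 w)\<bar>"
      using elim(4) by (simp add: abs_mult)
    also have "\<dots> = \<bar>mu False False w\<bar> * (1 - E_S1 w)"
      using elim(3,4) by (simp add: abs_mult)
    finally show ?case
      using elim(1,2) by simp
  qed
  note psi = integral_dominated_weight_psi[OF arm_value_measurable(4) arm_value_integrable(4)
      observed_measurable(4) f1mS_def _ integrable_abs[OF cE_int(1)] this]
  show "integrable M (\<lambda>w. mu False False w * ((1 - p True w) / (1 - p False w))
      * psi M X MX Z False (f1mS Z S1 S0) w)"
    by (rule psi(1)) (auto simp: integrable_Y_mult_of_bool)
  show "(\<integral>w. mu False False w * ((1 - p True w) / (1 - p False w)) * psi M X MX Z False (f1mS Z S1 S0) w \<partial>M)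
      = (\<integral>w. mu False False w * (1 - E_S1 w) \<partial>M)"
  proof (subst psi(2))
    have "AE w in M. E_X (\<lambda>v. 1 - of_bool (S0 v)) w = 1 - E_S0 w"
      by (rule cE_one_minus) simp
    with ratio have "AE w in M. mu False False w * ((1 - p True w) / (1 - p False w))
          * E_X (\<lambda>v. arm_value False (\<lambda>s y. 1 - of_bool s) (potentials v)) w
        = mu False False w * (1 - E_S1 w)"
      by eventually_elim (simp add: arm_value_def)
    then show "(\<integral>w. mu False False w * ((1 - p True w) / (1 - p False w))
          * E_X (\<lambda>v. arm_value False (\<lambda>s y. 1 - of_bool s) (potentials v)) w \<partial>M)
        = (\<integral>w. mu False False w * (1 - E_S1 w) \<partial>M)"
      by (rule integral_cong_AE[rotated 2]) measurable
  qed (auto simp: integrable_Y_mult_of_bool)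
qed

lemma integral_phi_1_10:
  "(\<integral>w. phi_1_10 M X MX Z S1 S0 Y1 Y0 w \<partial>M) = (\<integral>w. E_Y1_on (True, False) w \<partial>M)"
proof -
  have "(\<integral>w. phi_1_10 M X MX Z S1 S0 Y1 Y0 w \<partial>M)
      = (\<integral>w. e (True, False) w / p True w * psi M X MX Z True (fYS Z S1 S0 Y1 Y0) w
          - mu True True w * psi M X MX Z False (fS Z S1 S0) w
          + mu True True w * (p False w / p True w) * psi M X MX Z True (fS Z S1 S0) w \<partial>M)"
    by (rule Bochner_Integration.integral_cong) (auto simp: phi_1_10_def algebra_simps)
  also have "\<dots> = (\<integral>w. E_Y1_on (True, False) w \<partial>M)"
    using integral_share_psi_YS[of "(True, False)"] integral_mu11_psi_S integral_mu11_ratio_psi_S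
    by simp
  finally show ?thesis .
qed

lemma integral_phi_1_11:
  "(\<integral>w. phi_1_11 M X MX Z S1 S0 Y1 Y0 w \<partial>M) = (\<integral>w. E_Y1_on (True, True) w \<partial>M)"
proof -
  have "(\<integral>w. phi_1_11 M X MX Z S1 S0 Y1 Y0 w \<partial>M)
      = (\<integral>w. e (True, True) w / p True w * psi M X MX Z True (fYS Z S1 S0 Y1 Y0) w
          + mu True True w * psi M X MX Z False (fS Z S1 S0) w
          - mu True True w * (p False w / p True w) * psi M X MX Z True (fS Z S1 S0) w \<partial>M)"
    by (rule Bochner_Integration.integral_cong) (auto simp: phi_1_11_def algebra_simps)
  also have "\<dots> = (\<integral>w. E_Y1_on (True, True) w \<partial>M)"
    using integral_share_psi_YS[of "(True, True)"] integral_mu11_psi_S integral_mu11_ratio_psi_S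
    by simp
  finally show ?thesis .
qed

lemma integral_phi_0_10:
  "(\<integral>w. phi_0_10 M X MX Z S1 S0 Y1 Y0 w \<partial>M) = (\<integral>w. E_Y0_on (True, False) w \<partial>M)"
proof -
  have "(\<integral>w. phi_0_10 M X MX Z S1 S0 Y1 Y0 w \<partial>M)
      = (\<integral>w. e (True, False) w / (1 - p False w) * psi M X MX Z False (fY1mS Z S1 S0 Y1 Y0) w
          - mu False False w * psi M X MX Z True (f1mS Z S1 S0) w
          + mu False False w * ((1 - p True w) / (1 - p False w)) * psi M X MX Z False (f1mS Z S1 S0) w \<partial>M)"
    by (rule Bochner_Integration.integral_cong) (auto simp: phi_0_10_def algebra_simps)
  also have "\<dots> = (\<integral>w. E_Y0_on (True, False) w \<partial>M)"
    using integral_share_psi_Y_not_S[of "(True, False)"] integral_mu00_psi_not_S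
      integral_mu00_ratio_psi_not_S
    by simp
  finally show ?thesis .
qed

lemma integral_phi_0_00:
  "(\<integral>w. phi_0_00 M X MX Z S1 S0 Y1 Y0 w \<partial>M) = (\<integral>w. E_Y0_on (False, False) w \<partial>M)"
proof -
  have "(\<integral>w. phi_0_00 M X MX Z S1 S0 Y1 Y0 w \<partial>M)
      = (\<integral>w. e (False, False) w / (1 - p False w) * psi M X MX Z False (fY1mS Z S1 S0 Y1 Y0) w
          + mu False False w * psi M X MX Z True (f1mS Z S1 S0) w
          - mu False False w * ((1 - p True w) / (1 - p False w)) * psi M X MX Z False (f1mS Z S1 S0) w \<partial>M)"
    by (rule Bochner_Integration.integral_cong) (auto simp: phi_0_00_def algebra_simps)
  also have "\<dots> = (\<integral>w. E_Y0_on (False, False) w \<partial>M)"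
    using integral_share_psi_Y_not_S[of "(False, False)"] integral_mu00_psi_not_S
      integral_mu00_ratio_psi_not_S
    by simp
  finally show ?thesis .
qed

lemma integral_phi_1_00:
  "(\<integral>w. phi_1_00 M X MX Z S1 S0 Y1 Y0 w \<partial>M) = (\<integral>w. E_Y1_on (False, False) w \<partial>M)"
proof -
  have "(\<integral>w. phi_1_00 M X MX Z S1 S0 Y1 Y0 w \<partial>M)
      = (\<integral>w. arm_value True (\<lambda>s y. y * (1 - of_bool s)) (potentials w) \<partial>M)"
    unfolding phi_1_00_def
    by (rule integral_psi[OF arm_value_measurable(2) arm_value_integrable(2) observed_measurable(2) fY1mS_def])
  also have "\<dots> = (\<integral>w. Y1 w * of_bool ((S1 w, S0 w) = (False, False)) \<partial>M)"
    by (rule Bochner_Integration.integral_cong) (use A2 in \<open>auto simp: arm_value_def\<close>)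
  also have "\<dots> = (\<integral>w. E_Y1_on (False, False) w \<partial>M)"
    by (rule cE_int(2)[symmetric]) (simp add: integrable_Y_mult_of_bool)
  finally show ?thesis .
qed

lemma integral_phi_0_11:
  "(\<integral>w. phi_0_11 M X MX Z S1 S0 Y1 Y0 w \<partial>M) = (\<integral>w. E_Y0_on (True, True) w \<partial>M)"
proof -
  have "(\<integral>w. phi_0_11 M X MX Z S1 S0 Y1 Y0 w \<partial>M)
      = (\<integral>w. arm_value False (\<lambda>s y. y * of_bool s) (potentials w) \<partial>M)"
    unfolding phi_0_11_def
    by (rule integral_psi[OF arm_value_measurable(1) arm_value_integrable(1) observed_measurable(1) fYS_def])
  also have "\<dots> = (\<integral>w. Y0 w * of_bool ((S1 w, S0 w) = (True, True)) \<partial>M)"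
    by (rule Bochner_Integration.integral_cong) (use A2 in \<open>auto simp: arm_value_def\<close>)
  also have "\<dots> = (\<integral>w. E_Y0_on (True, True) w \<partial>M)"
    by (rule cE_int(2)[symmetric]) (simp add: integrable_Y_mult_of_bool)
  finally show ?thesis .
qed

lemma integral_psi_S:
  shows "integrable M (psi M X MX Z z (fS Z S1 S0))"
    and "(\<integral>w. psi M X MX Z z (fS Z S1 S0) w \<partial>M) = (\<integral>w. of_bool (if z then S1 w else S0 w) \<partial>M)"
  using integral_psi[OF arm_value_measurable(3) arm_value_integrable(3) observed_measurable(3) fS_def]
  by (simp_all add: arm_value_def if_distrib)

lemma measure_stratum:
  shows "measure M {w \<in> space M. (S1 w, S0 w) = (True, False)}
      = (\<integral>w. psi M X MX Z True (fS Z S1 S0) w - psi M X MX Z False (fS Z S1 S0) w \<partial>M)"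
    and "measure M {w \<in> space M. (S1 w, S0 w) = (False, False)}
      = (\<integral>w. 1 - psi M X MX Z True (fS Z S1 S0) w \<partial>M)"
    and "measure M {w \<in> space M. (S1 w, S0 w) = (True, True)}
      = (\<integral>w. psi M X MX Z False (fS Z S1 S0) w \<partial>M)"
proof -
  have "measure M {w \<in> space M. (S1 w, S0 w) = (True, False)} = (\<integral>w. of_bool (S1 w) - of_bool (S0 w) \<partial>M)"
    by (subst measure_eq_integral_of_bool, simp, rule Bochner_Integration.integral_cong)
      (use A2 in auto)
  then show "measure M {w \<in> space M. (S1 w, S0 w) = (True, False)}
      = (\<integral>w. psi M X MX Z True (fS Z S1 S0) w - psi M X MX Z False (fS Z S1 S0) w \<partial>M)"
    using integral_psi_S[of True] integral_psi_S[of False] by simp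
  have "measure M {w \<in> space M. (S1 w, S0 w) = (False, False)} = (\<integral>w. 1 - of_bool (S1 w) \<partial>M)"
    by (subst measure_eq_integral_of_bool, simp, rule Bochner_Integration.integral_cong)
      (use A2 in auto)
  then show "measure M {w \<in> space M. (S1 w, S0 w) = (False, False)}
      = (\<integral>w. 1 - psi M X MX Z True (fS Z S1 S0) w \<partial>M)"
    using integral_psi_S[of True] by simp
  have "measure M {w \<in> space M. (S1 w, S0 w) = (True, True)} = (\<integral>w. of_bool (S0 w) \<partial>M)"
    by (subst measure_eq_integral_of_bool, simp, rule Bochner_Integration.integral_cong)
      (use A2 in auto)
  then show "measure M {w \<in> space M. (S1 w, S0 w) = (True, True)}
      = (\<integral>w. psi M X MX Z False (fS Z S1 S0) w \<partial>M)"
    using integral_psi_S[of False] by simp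
qed

lemma tau_eq_integral_E_Y_on:
  "tau M S1 S0 Y1 Y0 u
    = ((\<integral>w. E_Y1_on u w \<partial>M) - (\<integral>w. E_Y0_on u w \<partial>M)) / measure M {w \<in> space M. (S1 w, S0 w) = u}"
proof -
  have "(\<integral>w. (Y1 w - Y0 w) * of_bool ((S1 w, S0 w) = u) \<partial>M)
      = (\<integral>w. Y1 w * of_bool ((S1 w, S0 w) = u) - Y0 w * of_bool ((S1 w, S0 w) = u) \<partial>M)"
    by (simp add: left_diff_distrib)
  also have "\<dots> = (\<integral>w. E_Y1_on u w \<partial>M) - (\<integral>w. E_Y0_on u w \<partial>M)"
    by (simp add: integrable_Y_mult_of_bool cE_int(2))
  finally show ?thesis
    unfolding tau_def by simp
qed

end

theorem corollary1:
  fixes M :: "'w measure" and X :: "'w \<Rightarrow> 'x" and MX :: "'x measure"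
    and Z S1 S0 :: "'w \<Rightarrow> bool" and Y1 Y0 :: "'w \<Rightarrow> real"
  assumes prob: "prob_space M"
    and X_meas: "X \<in> M \<rightarrow>\<^sub>M MX"
    and Z_meas: "Z \<in> M \<rightarrow>\<^sub>M count_space UNIV"
    and S1_meas: "S1 \<in> M \<rightarrow>\<^sub>M count_space UNIV"
    and S0_meas: "S0 \<in> M \<rightarrow>\<^sub>M count_space UNIV"
    and Y1_int: "integrable M Y1"
    and Y0_int: "integrable M Y0"
    and A1: "cond_indep M X MX Z (\<lambda>w. (S0 w, S1 w, Y0 w, Y1 w))
               (count_space UNIV \<Otimes>\<^sub>M (count_space UNIV \<Otimes>\<^sub>M (borel \<Otimes>\<^sub>M borel)))"
    and A2: "\<forall>w\<in>space M. S0 w \<longrightarrow> S1 w"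
    and A3_1: "AE w in M. eU M X MX S1 S0 (True, True) w > 0 \<and> eU M X MX S1 S0 (True, False) w > 0 \<longrightarrow>
                 cEev M X MX (\<lambda>v. (S1 v, S0 v) = (True, True)) Y1 w
               = cEev M X MX (\<lambda>v. (S1 v, S0 v) = (True, False)) Y1 w"
    and A3_0: "AE w in M. eU M X MX S1 S0 (False, False) w > 0 \<and> eU M X MX S1 S0 (True, False) w > 0 \<longrightarrow>
                 cEev M X MX (\<lambda>v. (S1 v, S0 v) = (False, False)) Y0 w
               = cEev M X MX (\<lambda>v. (S1 v, S0 v) = (True, False)) Y0 w"
    and overlap: "AE w in M. 0 < PZ M X MX Z True w \<and> PZ M X MX Z True w < 1"
    and pos_p: "AE w in M. 0 < pz M X MX Z S1 S0 True w \<and> pz M X MX Z S1 S0 False w < 1"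
    and int_phi: "integrable M (phi_1_10 M X MX Z S1 S0 Y1 Y0)" "integrable M (phi_0_10 M X MX Z S1 S0 Y1 Y0)"
      "integrable M (phi_1_00 M X MX Z S1 S0 Y1 Y0)" "integrable M (phi_0_00 M X MX Z S1 S0 Y1 Y0)"
      "integrable M (phi_1_11 M X MX Z S1 S0 Y1 Y0)" "integrable M (phi_0_11 M X MX Z S1 S0 Y1 Y0)"
  shows "tau M S1 S0 Y1 Y0 (True, False) =
           (\<integral>w. phi_1_10 M X MX Z S1 S0 Y1 Y0 w - phi_0_10 M X MX Z S1 S0 Y1 Y0 w \<partial>M)
         / (\<integral>w. psi M X MX Z True (fS Z S1 S0) w - psi M X MX Z False (fS Z S1 S0) w \<partial>M)
    \<and> tau M S1 S0 Y1 Y0 (False, False) =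
           (\<integral>w. phi_1_00 M X MX Z S1 S0 Y1 Y0 w - phi_0_00 M X MX Z S1 S0 Y1 Y0 w \<partial>M)
         / (\<integral>w. 1 - psi M X MX Z True (fS Z S1 S0) w \<partial>M)
    \<and> tau M S1 S0 Y1 Y0 (True, True) =
           (\<integral>w. phi_1_11 M X MX Z S1 S0 Y1 Y0 w - phi_0_11 M X MX Z S1 S0 Y1 Y0 w \<partial>M)
         / (\<integral>w. psi M X MX Z False (fS Z S1 S0) w \<partial>M)"
proof -
  interpret principal_strata_model M X MX Z S1 S0 Y1 Y0
    by (intro principal_strata_model.intro covariate_conditioning.intro principal_strata_model_axioms.intro)
      (fact assms)+
  show ?thesis
    unfolding Bochner_Integration.integral_diff[OF int_phi(1,2)] Bochner_Integration.integral_diff[OF int_phi(3,4)]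
      Bochner_Integration.integral_diff[OF int_phi(5,6)] tau_eq_integral_E_Y_on measure_stratum
      integral_phi_1_10 integral_phi_0_10 integral_phi_1_00 integral_phi_0_00 integral_phi_1_11 integral_phi_0_11
    by (intro conjI refl)
qed

end
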